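(* Let $R$ be a local ring and $s\in R$ a central element with $s\in J(R)$. Then $A\in M_2(R;s)$ is strongly $J$-clean if and only if one of the following holds: (1) $A\in J\big(M_2(R;s)\big)$; (2) $I_2-A\in J\big(M_2(R;s)\big)$; (3) $A$ is similar to $\left[\begin{smallmatrix} u&1\\ v&w\end{smallmatrix}\right]$ for some $u\in 1+J(R)$, $v\in U(R)$, $w\in J(R)$ such that the equation $t^2-(vuv^{-1}+w)t+(vuv^{-1}w-s^2v)=0$ has a right root in $1+J(R)$ and the equation $t^2-(u+w)t+(wu-s^2v)=0$ has a right root in $J(R)$; (4) $A$ is similar to $\left[\begin{smallmatrix} w&1\\ v&u\end{smallmatrix}\right]$ for some $u\in 1+J(R)$, $v\in U(R)$, $w\in J(R)$ such that the equation $t^2-(u+vwv^{-1})t+(vwv^{-1}u-s^2v)=0$ has a right root in $J(R)$ and the equation $t^2-(u+w)t+(uw-s^2v)=0$ has a right root in $1+J(R)$.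
   Context: All rings are associative with identity. A ring $R$ is local if $R/J(R)$ is a division ring, where $J(R)$ is the Jacobson radical; $U(R)$ is the group of units. For $a,b\in R$, an element $r\in R$ is a right root of $t^2-at+b$ if $r^2-ar+b=0$. For a ring $R$ and a central element $s\in R$, $M_2(R;s)$ denotes the ring whose elements are the $2\times 2$ arrays $\left[\begin{smallmatrix} a&b\\ c&d\end{smallmatrix}\right]$ with $a,b,c,d\in R$, with componentwise addition and multiplication $\left[\begin{smallmatrix} a&b\\ c&d\end{smallmatrix}\right]\left[\begin{smallmatrix} a'&b'\\ c'&d'\end{smallmatrix}\right]=\left[\begin{smallmatrix} aa'+s^2bc'&ab'+bd'\\ ca'+dc'&s^2cb'+dd'\end{smallmatrix}\right]$, with identity $I_2$. Two elements $A,B\in M_2(R;s)$ are similar if $B=P^{-1}AP$ for some unit $P$ of $M_2(R;s)$. An element $a$ of a ring $T$ is strongly $J$-clean if there is an idempotent $e\in T$ with $ae=ea$ and $a-e\in J(T)$. *)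

theory Defs
  imports "HOL-Algebra.Algebra"
begin

definition left_ideal :: "('a, 'b) ring_scheme \<Rightarrow> 'a set \<Rightarrow> bool" where
  "left_ideal R I \<longleftrightarrow> additive_subgroup I R \<and>
     (\<forall>r \<in> carrier R. \<forall>x \<in> I. r \<otimes>\<^bsub>R\<^esub> x \<in> I)"

definition maximal_left_ideal :: "('a, 'b) ring_scheme \<Rightarrow> 'a set \<Rightarrow> bool" where
  "maximal_left_ideal R M \<longleftrightarrow> left_ideal R M \<and> M \<noteq> carrier R \<and>
     (\<forall>I. left_ideal R I \<and> M \<subseteq> I \<longrightarrow> I = M \<or> I = carrier R)"

definition jacobson :: "('a, 'b) ring_scheme \<Rightarrow> 'a set" where
  "jacobson R = {x \<in> carrier R. \<forall>M. maximal_left_ideal R M \<longrightarrow> x \<in> M}"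

definition division_ring :: "('a, 'b) ring_scheme \<Rightarrow> bool" where
  "division_ring R \<longleftrightarrow> ring R \<and> \<one>\<^bsub>R\<^esub> \<noteq> \<zero>\<^bsub>R\<^esub> \<and>
     (\<forall>x \<in> carrier R. x \<noteq> \<zero>\<^bsub>R\<^esub> \<longrightarrow> x \<in> Units R)"

definition local_ring :: "('a, 'b) ring_scheme \<Rightarrow> bool" where
  "local_ring R \<longleftrightarrow> division_ring (R Quot jacobson R)"

definition central :: "('a, 'b) ring_scheme \<Rightarrow> 'a \<Rightarrow> bool" where
  "central R s \<longleftrightarrow> s \<in> carrier R \<and> (\<forall>x \<in> carrier R. s \<otimes>\<^bsub>R\<^esub> x = x \<otimes>\<^bsub>R\<^esub> s)"

definition one_plus_J :: "('a, 'b) ring_scheme \<Rightarrow> 'a set" where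
  "one_plus_J R = {\<one>\<^bsub>R\<^esub> \<oplus>\<^bsub>R\<^esub> j | j. j \<in> jacobson R}"

definition right_root :: "('a, 'b) ring_scheme \<Rightarrow> 'a \<Rightarrow> 'a \<Rightarrow> 'a \<Rightarrow> bool" where
  "right_root R a b r \<longleftrightarrow>
     (r \<otimes>\<^bsub>R\<^esub> r) \<ominus>\<^bsub>R\<^esub> (a \<otimes>\<^bsub>R\<^esub> r) \<oplus>\<^bsub>R\<^esub> b = \<zero>\<^bsub>R\<^esub>"

(* entries of a 2x2 array [a b; c d], represented as the tuple (a, b, c, d) *)
definition e11 :: "'a \<times> 'a \<times> 'a \<times> 'a \<Rightarrow> 'a" where "e11 M = fst M"
definition e12 :: "'a \<times> 'a \<times> 'a \<times> 'a \<Rightarrow> 'a" where "e12 M = fst (snd M)"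
definition e21 :: "'a \<times> 'a \<times> 'a \<times> 'a \<Rightarrow> 'a" where "e21 M = fst (snd (snd M))"
definition e22 :: "'a \<times> 'a \<times> 'a \<times> 'a \<Rightarrow> 'a" where "e22 M = snd (snd (snd M))"

definition M2_mult :: "('a, 'b) ring_scheme \<Rightarrow> 'a \<Rightarrow> 'a \<times> 'a \<times> 'a \<times> 'a \<Rightarrow> 'a \<times> 'a \<times> 'a \<times> 'a \<Rightarrow> 'a \<times> 'a \<times> 'a \<times> 'a" where
  "M2_mult R s M N =
     (e11 M \<otimes>\<^bsub>R\<^esub> e11 N \<oplus>\<^bsub>R\<^esub> s \<otimes>\<^bsub>R\<^esub> s \<otimes>\<^bsub>R\<^esub> e12 M \<otimes>\<^bsub>R\<^esub> e21 N,
      e11 M \<otimes>\<^bsub>R\<^esub> e12 N \<oplus>\<^bsub>R\<^esub> e12 M \<otimes>\<^bsub>R\<^esub> e22 N,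
      e21 M \<otimes>\<^bsub>R\<^esub> e11 N \<oplus>\<^bsub>R\<^esub> e22 M \<otimes>\<^bsub>R\<^esub> e21 N,
      s \<otimes>\<^bsub>R\<^esub> s \<otimes>\<^bsub>R\<^esub> e21 M \<otimes>\<^bsub>R\<^esub> e12 N \<oplus>\<^bsub>R\<^esub> e22 M \<otimes>\<^bsub>R\<^esub> e22 N)"

definition M2_add :: "('a, 'b) ring_scheme \<Rightarrow> 'a \<times> 'a \<times> 'a \<times> 'a \<Rightarrow> 'a \<times> 'a \<times> 'a \<times> 'a \<Rightarrow> 'a \<times> 'a \<times> 'a \<times> 'a" where
  "M2_add R M N = (e11 M \<oplus>\<^bsub>R\<^esub> e11 N, e12 M \<oplus>\<^bsub>R\<^esub> e12 N,
                   e21 M \<oplus>\<^bsub>R\<^esub> e21 N, e22 M \<oplus>\<^bsub>R\<^esub> e22 N)"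

definition M2 :: "('a, 'b) ring_scheme \<Rightarrow> 'a \<Rightarrow> ('a \<times> 'a \<times> 'a \<times> 'a) ring" where
  "M2 R s = \<lparr> partial_object.carrier = carrier R \<times> carrier R \<times> carrier R \<times> carrier R,
     monoid.mult = M2_mult R s,
     monoid.one = (\<one>\<^bsub>R\<^esub>, \<zero>\<^bsub>R\<^esub>, \<zero>\<^bsub>R\<^esub>, \<one>\<^bsub>R\<^esub>),
     ring.zero = (\<zero>\<^bsub>R\<^esub>, \<zero>\<^bsub>R\<^esub>, \<zero>\<^bsub>R\<^esub>, \<zero>\<^bsub>R\<^esub>),
     ring.add = M2_add R \<rparr>"

definition similar :: "('a, 'b) ring_scheme \<Rightarrow> 'a \<Rightarrow> 'a \<Rightarrow> bool" where
  "similar T A B \<longleftrightarrow> (\<exists>P \<in> Units T. B = inv\<^bsub>T\<^esub> P \<otimes>\<^bsub>T\<^esub> A \<otimes>\<^bsub>T\<^esub> P)"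

definition strongly_J_clean :: "('a, 'b) ring_scheme \<Rightarrow> 'a \<Rightarrow> bool" where
  "strongly_J_clean T a \<longleftrightarrow> (\<exists>e \<in> carrier T. e \<otimes>\<^bsub>T\<^esub> e = e \<and>
     a \<otimes>\<^bsub>T\<^esub> e = e \<otimes>\<^bsub>T\<^esub> a \<and> a \<ominus>\<^bsub>T\<^esub> e \<in> jacobson T)"

end

theory Submission
  imports Defs
begin

text \<open>
  Over \<open>M\<^sub>2(R;s)\<close> with \<open>s \<in> J(R)\<close>, a matrix lies in the Jacobson radical iff its diagonal
  entries lie in \<open>J(R)\<close>, and it is a unit as soon as its diagonal entries are units. So the diagonal
  entries of an idempotent \<open>e\<close> are idempotent modulo \<open>J(R)\<close>, and as \<open>R\<close> is local each lies in
  \<open>J(R)\<close> or in \<open>1 + J(R)\<close>. For \<open>A\<close> strongly \<open>J\<close>-clean via \<open>e\<close> this leaves four cases: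
  \<open>e \<in> J\<close>, whence \<open>A \<in> J\<close>; \<open>I\<^sub>2 - e \<in> J\<close>, whence \<open>I\<^sub>2 - A \<in> J\<close>; or \<open>e\<close> is congruent modulo the
  radical to \<open>diag(1,0)\<close> or \<open>diag(0,1)\<close>. Idempotents congruent modulo the radical are conjugate,
  so in the last two cases \<open>A\<close> is similar to a matrix commuting with \<open>diag(1,0)\<close> (resp.
  \<open>diag(0,1)\<close>), that is, to \<open>diag(\<alpha>,\<beta>)\<close> (resp. \<open>diag(\<beta>,\<alpha>)\<close>) with \<open>\<alpha> \<in> 1 + J(R)\<close>, \<open>\<beta> \<in> J(R)\<close>;
  all these conditions conversely give strongly \<open>J\<close>-clean matrices.

  It remains to relate diagonal matrices to the shapes \<open>[u 1; v w]\<close> and \<open>[w 1; v u]\<close>. The matrix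
  \<open>[v\<inverse>(d\<^sub>1 - y) 1; 1 d\<^sub>2 - x]\<close> intertwines \<open>[x 1; v y]\<close> with \<open>diag(d\<^sub>1, d\<^sub>2)\<close> exactly when \<open>d\<^sub>1\<close> and
  \<open>d\<^sub>2\<close> are right roots of the two quadratics, and it is a unit when \<open>d\<^sub>1 - y\<close> and \<open>d\<^sub>2 - x\<close> are.
  Conversely \<open>diag(d\<^sub>1, d\<^sub>2)\<close> with \<open>g = d\<^sub>1 - d\<^sub>2\<close> a unit is similar to such a matrix with
  \<open>x = d\<^sub>1 - s\<^sup>2\<close>, \<open>y = g (d\<^sub>2 + s\<^sup>2) g\<inverse>\<close> and \<open>v = d\<^sub>1 - y\<close>.
\<close>

section \<open>Left ideals and the Jacobson radical\<close>

context ring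
begin

text \<open>The \<open>algebra\<close> setup for noncommutative rings omits \<open>r_one\<close>, without which it cannot
  normalise products with \<open>\<one>\<close> on the right.\<close>

lemmas ring_simprules_r_one [algebra ring "ring.zero R" "ring.add R" "a_inv R" "a_minus R"
    "monoid.one R" "monoid.mult R"] = ring_simprules r_one

definition left_invertible :: "'a \<Rightarrow> bool" where
  "left_invertible x \<longleftrightarrow> (\<exists>y\<in>carrier R. y \<otimes> x = \<one>)"

lemma additive_subgroup_closedI:
  assumes "H \<subseteq> carrier R" "\<zero> \<in> H" "\<And>a b. a \<in> H \<Longrightarrow> b \<in> H \<Longrightarrow> a \<oplus> b \<in> H"
    "\<And>a. a \<in> H \<Longrightarrow> \<ominus> a \<in> H"
  shows "additive_subgroup H R"
  using assms unfolding additive_subgroup_def subgroup_def a_inv_def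
  by (auto simp: monoid_record_simps)

lemma left_ideal_subset: "left_ideal R I \<Longrightarrow> I \<subseteq> carrier R"
  unfolding left_ideal_def using additive_subgroup.a_subset by blast

lemma left_ideal_one_imp_carrier: "left_ideal R I \<Longrightarrow> \<one> \<in> I \<Longrightarrow> I = carrier R"
  using left_ideal_subset unfolding left_ideal_def by (metis r_one subsetI subset_antisym)

lemma left_ideal_principal:
  assumes z: "z \<in> carrier R"
  shows "left_ideal R {a \<otimes> z | a. a \<in> carrier R}"
  unfolding left_ideal_def
proof (intro conjI ballI)
  show "additive_subgroup {a \<otimes> z | a. a \<in> carrier R} R"
  proof (rule additive_subgroup_closedI)
    fix x y assume "x \<in> {a \<otimes> z | a. a \<in> carrier R}" "y \<in> {a \<otimes> z | a. a \<in> carrier R}"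
    then obtain a b where "x = a \<otimes> z" "y = b \<otimes> z" "a \<in> carrier R" "b \<in> carrier R" by auto
    moreover have "a \<otimes> z \<oplus> b \<otimes> z = (a \<oplus> b) \<otimes> z" using z calculation by (simp add: l_distr)
    ultimately show "x \<oplus> y \<in> {a \<otimes> z | a. a \<in> carrier R}" by auto
  next
    fix x assume "x \<in> {a \<otimes> z | a. a \<in> carrier R}"
    then obtain a where "x = a \<otimes> z" "a \<in> carrier R" by auto
    moreover have "\<ominus> (a \<otimes> z) = (\<ominus> a) \<otimes> z" using z calculation by (simp add: l_minus)
    ultimately show "\<ominus> x \<in> {a \<otimes> z | a. a \<in> carrier R}" by auto
  next
    have "\<zero> = \<zero> \<otimes> z" using z by simp
    thus "\<zero> \<in> {a \<otimes> z | a. a \<in> carrier R}" by blast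
  qed (use z in auto)
next
  fix r x assume "r \<in> carrier R" "x \<in> {a \<otimes> z | a. a \<in> carrier R}"
  then obtain a where "x = a \<otimes> z" "a \<in> carrier R" by auto
  moreover have "r \<otimes> (a \<otimes> z) = (r \<otimes> a) \<otimes> z" using z \<open>r \<in> carrier R\<close> calculation by (simp add: m_assoc)
  ultimately show "r \<otimes> x \<in> {a \<otimes> z | a. a \<in> carrier R}" using \<open>r \<in> carrier R\<close> by auto
qed

lemma left_ideal_add_principal:
  assumes M: "left_ideal R M" and x: "x \<in> carrier R"
  shows "left_ideal R {m \<oplus> r \<otimes> x | m r. m \<in> M \<and> r \<in> carrier R}"
    (is "left_ideal R ?I")
  unfolding left_ideal_def
proof (intro conjI ballI)
  have Msub: "M \<subseteq> carrier R" using left_ideal_subset[OF M] .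
  have asM: "additive_subgroup M R" using M unfolding left_ideal_def by auto
  show "additive_subgroup ?I R"
  proof (rule additive_subgroup_closedI)
    show "?I \<subseteq> carrier R" using Msub x by auto
    have "\<zero> = \<zero> \<oplus> \<zero> \<otimes> x" using x by simp
    thus "\<zero> \<in> ?I" using additive_subgroup.zero_closed[OF asM] by blast
  next
    fix a b assume "a \<in> ?I" "b \<in> ?I"
    then obtain m1 r1 m2 r2 where a: "a = m1 \<oplus> r1 \<otimes> x" "m1 \<in> M" "r1 \<in> carrier R"
      and b: "b = m2 \<oplus> r2 \<otimes> x" "m2 \<in> M" "r2 \<in> carrier R" by auto
    have "m1 \<in> carrier R" "m2 \<in> carrier R" using a b Msub by auto
    hence "a \<oplus> b = (m1 \<oplus> m2) \<oplus> (r1 \<oplus> r2) \<otimes> x" using a b x by simp algebra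
    thus "a \<oplus> b \<in> ?I" using a b additive_subgroup.a_closed[OF asM] by blast
  next
    fix a assume "a \<in> ?I"
    then obtain m r where a: "a = m \<oplus> r \<otimes> x" "m \<in> M" "r \<in> carrier R" by auto
    have "m \<in> carrier R" using a Msub by auto
    hence "\<ominus> a = (\<ominus> m) \<oplus> (\<ominus> r) \<otimes> x" using a x by simp algebra
    thus "\<ominus> a \<in> ?I" using a additive_subgroup.a_inv_closed[OF asM] by blast
  qed
next
  fix r y assume r: "r \<in> carrier R" and "y \<in> ?I"
  then obtain m r1 where y: "y = m \<oplus> r1 \<otimes> x" "m \<in> M" "r1 \<in> carrier R" by auto
  have "m \<in> carrier R" using y left_ideal_subset[OF M] by auto
  hence "r \<otimes> y = r \<otimes> m \<oplus> (r \<otimes> r1) \<otimes> x" using y x r by simp algebra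
  moreover have "r \<otimes> m \<in> M" using M r y unfolding left_ideal_def by auto
  ultimately show "r \<otimes> y \<in> ?I" using r y by blast
qed

lemma left_ideal_chain_Union:
  assumes ne: "C \<noteq> {}" and ch: "subset.chain {I. left_ideal R I \<and> L \<subseteq> I \<and> \<one> \<notin> I} C"
  shows "\<Union>C \<in> {I. left_ideal R I \<and> L \<subseteq> I \<and> \<one> \<notin> I}"
proof -
  have mem: "\<And>I. I \<in> C \<Longrightarrow> left_ideal R I \<and> L \<subseteq> I \<and> \<one> \<notin> I"
    and tot: "\<And>I J. I \<in> C \<Longrightarrow> J \<in> C \<Longrightarrow> I \<subseteq> J \<or> J \<subseteq> I"
    using ch unfolding subset_chain_def by auto
  have asg: "\<And>I. I \<in> C \<Longrightarrow> additive_subgroup I R"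
    using mem unfolding left_ideal_def by simp
  obtain I0 where I0: "I0 \<in> C" using ne by auto
  have "additive_subgroup (\<Union>C) R"
  proof (rule additive_subgroup_closedI)
    show "\<Union>C \<subseteq> carrier R" using left_ideal_subset mem by blast
    show "\<zero> \<in> \<Union>C" using I0 additive_subgroup.zero_closed[OF asg[OF I0]] by blast
  next
    fix a b assume "a \<in> \<Union>C" "b \<in> \<Union>C"
    then obtain I J where IJ: "I \<in> C" "J \<in> C" "a \<in> I" "b \<in> J" by auto
    from tot[OF IJ(1,2)] show "a \<oplus> b \<in> \<Union>C"
    proof
      assume "I \<subseteq> J"
      thus ?thesis using IJ additive_subgroup.a_closed[OF asg[OF IJ(2)]] by blast
    next
      assume "J \<subseteq> I"
      thus ?thesis using IJ additive_subgroup.a_closed[OF asg[OF IJ(1)]] by blast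
    qed
  next
    fix a assume "a \<in> \<Union>C"
    thus "\<ominus> a \<in> \<Union>C" using additive_subgroup.a_inv_closed[OF asg] by blast
  qed
  moreover have "\<forall>r\<in>carrier R. \<forall>x\<in>\<Union>C. r \<otimes> x \<in> \<Union>C"
    using mem unfolding left_ideal_def by blast
  ultimately have "left_ideal R (\<Union>C)" unfolding left_ideal_def by blast
  thus ?thesis using mem I0 by blast
qed

lemma maximal_left_ideal_exists:
  assumes L: "left_ideal R L" and one: "\<one> \<notin> L"
  obtains M where "maximal_left_ideal R M" "L \<subseteq> M"
proof -
  let ?F = "{I. left_ideal R I \<and> L \<subseteq> I \<and> \<one> \<notin> I}"
  have "?F \<noteq> {}" using L one by blast
  then obtain M where M: "M \<in> ?F" and Mmax: "\<And>Y. Y \<in> ?F \<Longrightarrow> M \<subseteq> Y \<Longrightarrow> Y = M"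
    using subset_Zorn_nonempty[of ?F] left_ideal_chain_Union by auto
  have "I = M \<or> I = carrier R" if I: "left_ideal R I" "M \<subseteq> I" for I
  proof (cases "\<one> \<in> I")
    case True
    thus ?thesis using left_ideal_one_imp_carrier[OF I(1)] by simp
  next
    case False
    hence "I \<in> ?F" using I M by auto
    thus ?thesis using Mmax I(2) by simp
  qed
  moreover have "M \<noteq> carrier R" using M by auto
  ultimately have "maximal_left_ideal R M" using M unfolding maximal_left_ideal_def by auto
  with M that show ?thesis by blast
qed

lemma jacobson_closed: "x \<in> jacobson R \<Longrightarrow> x \<in> carrier R"
  unfolding jacobson_def by auto

lemma jacobsonI:
  assumes x: "x \<in> carrier R" and h: "\<And>r. r \<in> carrier R \<Longrightarrow> left_invertible (\<one> \<ominus> r \<otimes> x)"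
  shows "x \<in> jacobson R"
  unfolding jacobson_def
proof (safe intro!: x)
  fix M assume M: "maximal_left_ideal R M"
  hence LM: "left_ideal R M" and MC: "M \<noteq> carrier R"
    and mx: "\<And>I. left_ideal R I \<Longrightarrow> M \<subseteq> I \<Longrightarrow> I = M \<or> I = carrier R"
    unfolding maximal_left_ideal_def by auto
  have asM: "additive_subgroup M R" using LM unfolding left_ideal_def by auto
  show "x \<in> M"
  proof (rule ccontr)
    assume xM: "x \<notin> M"
    let ?I = "{m \<oplus> r \<otimes> x | m r. m \<in> M \<and> r \<in> carrier R}"
    have "m = m \<oplus> \<zero> \<otimes> x" if "m \<in> M" for m
      using that left_ideal_subset[OF LM] x by auto
    hence "M \<subseteq> ?I" by blast
    moreover have "x = \<zero> \<oplus> \<one> \<otimes> x" using x by simp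
    hence "x \<in> ?I" using additive_subgroup.zero_closed[OF asM] by blast
    ultimately have "?I = carrier R" using mx[OF left_ideal_add_principal[OF LM x]] xM by blast
    hence "\<one> \<in> ?I" by simp
    then obtain m r where mr: "\<one> = m \<oplus> r \<otimes> x" "m \<in> M" "r \<in> carrier R" by blast
    have "m \<in> carrier R" using mr left_ideal_subset[OF LM] by auto
    hence "m = \<one> \<ominus> r \<otimes> x" using mr x
      by (metis a_minus_def add.inv_solve_right' m_closed one_closed)
    then obtain y where y: "y \<in> carrier R" "y \<otimes> m = \<one>"
      using h[OF mr(3)] unfolding left_invertible_def by auto
    have "y \<otimes> m \<in> M" using LM y(1) mr(2) unfolding left_ideal_def by blast
    hence "\<one> \<in> M" using y(2) by simp
    thus False using left_ideal_one_imp_carrier[OF LM] MC by simp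
  qed
qed

lemma jacobsonD:
  assumes x: "x \<in> jacobson R" and r: "r \<in> carrier R"
  shows "left_invertible (\<one> \<ominus> r \<otimes> x)"
proof (rule ccontr)
  let ?z = "\<one> \<ominus> r \<otimes> x"
  let ?L = "{a \<otimes> ?z | a. a \<in> carrier R}"
  assume "\<not> left_invertible ?z"
  hence "\<one> \<notin> ?L" unfolding left_invertible_def by auto
  have xC: "x \<in> carrier R" using x jacobson_closed by auto
  hence zC: "?z \<in> carrier R" using r by auto
  obtain M where M: "maximal_left_ideal R M" "?L \<subseteq> M"
    using maximal_left_ideal_exists[OF left_ideal_principal[OF zC] \<open>\<one> \<notin> ?L\<close>] .
  have LM: "left_ideal R M" using M unfolding maximal_left_ideal_def by simp
  have "?z = \<one> \<otimes> ?z" using zC by simp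
  hence "?z \<in> M" using M(2) by blast
  moreover have "x \<in> M" using x M(1) unfolding jacobson_def by blast
  hence "r \<otimes> x \<in> M" using LM r unfolding left_ideal_def by blast
  ultimately have "?z \<oplus> r \<otimes> x \<in> M"
    using LM unfolding left_ideal_def by (blast intro: additive_subgroup.a_closed)
  moreover have "?z \<oplus> r \<otimes> x = \<one>" using xC r by algebra
  ultimately have "\<one> \<in> M" by simp
  thus False using M(1) left_ideal_one_imp_carrier[OF LM] unfolding maximal_left_ideal_def by simp
qed

lemma jacobson_zero [simp]: "\<zero> \<in> jacobson R"
  unfolding jacobson_def maximal_left_ideal_def left_ideal_def
  by (auto intro: additive_subgroup.zero_closed)

lemma jacobson_add: "x \<in> jacobson R \<Longrightarrow> y \<in> jacobson R \<Longrightarrow> x \<oplus> y \<in> jacobson R"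
  unfolding jacobson_def maximal_left_ideal_def left_ideal_def
  by (auto intro: additive_subgroup.a_closed)

lemma jacobson_neg: "x \<in> jacobson R \<Longrightarrow> \<ominus> x \<in> jacobson R"
  unfolding jacobson_def maximal_left_ideal_def left_ideal_def
  by (auto intro: additive_subgroup.a_inv_closed)

lemma jacobson_minus: "x \<in> jacobson R \<Longrightarrow> y \<in> jacobson R \<Longrightarrow> x \<ominus> y \<in> jacobson R"
  unfolding a_minus_def using jacobson_add jacobson_neg by blast

lemma jacobson_l_mult: "r \<in> carrier R \<Longrightarrow> x \<in> jacobson R \<Longrightarrow> r \<otimes> x \<in> jacobson R"
  unfolding jacobson_def maximal_left_ideal_def left_ideal_def by auto

lemma UnitsI: "x \<in> carrier R \<Longrightarrow> y \<in> carrier R \<Longrightarrow> x \<otimes> y = \<one> \<Longrightarrow> y \<otimes> x = \<one> \<Longrightarrow> x \<in> Units R"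
  unfolding Units_def by auto

lemma left_invertible_Units:
  assumes "y \<in> carrier R" "x \<in> carrier R" "y \<otimes> x = \<one>" "left_invertible y"
  shows "x \<in> Units R" "y \<in> Units R"
proof -
  obtain z where z: "z \<in> carrier R" "z \<otimes> y = \<one>" using assms(4) unfolding left_invertible_def by auto
  have "z = x" using inv_unique[OF z(2) assms(3) assms(1) z(1) assms(2)] .
  thus "x \<in> Units R" "y \<in> Units R" unfolding Units_def using assms z by auto
qed

lemma one_plus_jacobson_Units:
  assumes x: "x \<in> jacobson R" shows "\<one> \<oplus> x \<in> Units R"
proof -
  have xC: "x \<in> carrier R" using x jacobson_closed by auto
  have "left_invertible (\<one> \<ominus> (\<ominus> \<one>) \<otimes> x)" by (rule jacobsonD[OF x]) simp
  moreover have "\<one> \<ominus> (\<ominus> \<one>) \<otimes> x = \<one> \<oplus> x" using xC by algebra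
  ultimately obtain y where y: "y \<in> carrier R" "y \<otimes> (\<one> \<oplus> x) = \<one>"
    unfolding left_invertible_def by auto
  txt \<open>\<open>y = \<one> \<ominus> y \<otimes> x\<close> is left invertible too, so \<open>y\<close> is a two-sided inverse.\<close>
  have "\<one> \<ominus> y \<otimes> x = y" using y xC
    by (metis a_minus_def add.inv_solve_right m_closed one_closed r_distr r_one)
  hence "left_invertible y" using jacobsonD[OF x y(1)] by simp
  thus ?thesis using left_invertible_Units[OF y(1) _ y(2)] xC by auto
qed

lemma one_minus_jacobson_Units: "x \<in> jacobson R \<Longrightarrow> \<one> \<ominus> x \<in> Units R"
  using one_plus_jacobson_Units[OF jacobson_neg] unfolding a_minus_def by simp

lemma Units_plus_jacobson_Units:
  assumes u: "u \<in> Units R" and x: "x \<in> jacobson R" shows "u \<oplus> x \<in> Units R"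
proof -
  have xC: "x \<in> carrier R" using x jacobson_closed by auto
  have "u \<oplus> x = u \<otimes> (\<one> \<oplus> inv u \<otimes> x)" using u xC
    by (simp add: r_distr m_assoc[symmetric] Units_closed)
  moreover have "\<one> \<oplus> inv u \<otimes> x \<in> Units R"
    using one_plus_jacobson_Units[OF jacobson_l_mult[OF _ x]] u by simp
  ultimately show ?thesis using u by simp
qed

lemma jacobson_r_mult:
  assumes x: "x \<in> jacobson R" and a: "a \<in> carrier R" shows "x \<otimes> a \<in> jacobson R"
proof (rule jacobsonI)
  have xC: "x \<in> carrier R" using x jacobson_closed by auto
  show "x \<otimes> a \<in> carrier R" using xC a by simp
  fix r assume r: "r \<in> carrier R"
  have "\<one> \<ominus> a \<otimes> (r \<otimes> x) \<in> Units R"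
    by (rule one_minus_jacobson_Units[OF jacobson_l_mult[OF a jacobson_l_mult[OF r x]]])
  then obtain z where z: "z \<in> carrier R" "z \<otimes> (\<one> \<ominus> a \<otimes> (r \<otimes> x)) = \<one>"
    unfolding Units_def by auto
  txt \<open>The usual inverse \<open>\<one> \<oplus> r x z a\<close> of \<open>\<one> \<ominus> r x a\<close>, from an inverse \<open>z\<close> of \<open>\<one> \<ominus> a r x\<close>.\<close>
  have "(\<one> \<oplus> r \<otimes> x \<otimes> z \<otimes> a) \<otimes> (\<one> \<ominus> r \<otimes> (x \<otimes> a))
      = \<one> \<ominus> r \<otimes> x \<otimes> a \<oplus> r \<otimes> x \<otimes> ((z \<otimes> (\<one> \<ominus> a \<otimes> (r \<otimes> x))) \<otimes> a)"
    using z(1) xC a r by (simp add: r_distr l_distr a_minus_def r_minus l_minus m_assoc a_ac minus_add)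
  also have "\<dots> = \<one>" using z xC a r by simp algebra
  finally show "left_invertible (\<one> \<ominus> r \<otimes> (x \<otimes> a))" unfolding left_invertible_def
    using z(1) xC a r by (intro bexI[of _ "\<one> \<oplus> r \<otimes> x \<otimes> z \<otimes> a"]) auto
qed

lemma jacobson_ideal: "ideal (jacobson R) R"
proof (rule idealI)
  have "additive_subgroup (jacobson R) R"
    by (rule additive_subgroup_closedI) (auto intro: jacobson_closed jacobson_add jacobson_neg)
  thus "subgroup (jacobson R) (add_monoid R)" by (rule additive_subgroup.a_subgroup)
qed (auto intro: jacobson_l_mult jacobson_r_mult ring_axioms)

lemma Units_of_Units_products:
  assumes x: "x \<in> carrier R" and y: "y \<in> carrier R"
    and xy: "x \<otimes> y \<in> Units R" and yx: "y \<otimes> x \<in> Units R"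
  shows "x \<in> Units R"
proof -
  let ?p = "inv (x \<otimes> y)" and ?q = "inv (y \<otimes> x)"
  have r: "x \<otimes> (y \<otimes> ?p) = \<one>" using xy x y by (metis Units_r_inv m_assoc Units_inv_closed)
  have l: "(?q \<otimes> y) \<otimes> x = \<one>" using yx x y by (metis Units_l_inv m_assoc Units_inv_closed)
  have "?q \<otimes> y = y \<otimes> ?p" using inv_unique[OF l r] x y xy yx by simp
  thus ?thesis unfolding Units_def using x y r l xy yx
    by (intro CollectI conjI bexI[of _ "y \<otimes> ?p"]) auto
qed

lemma one_plus_J_iff: "z \<in> one_plus_J R \<longleftrightarrow> z \<in> carrier R \<and> z \<ominus> \<one> \<in> jacobson R"
proof
  assume "z \<in> one_plus_J R"
  then obtain j where j: "j \<in> jacobson R" "z = \<one> \<oplus> j" unfolding one_plus_J_def by auto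
  have jC: "j \<in> carrier R" using j jacobson_closed by auto
  have "z \<ominus> \<one> = j" using j jC by algebra
  thus "z \<in> carrier R \<and> z \<ominus> \<one> \<in> jacobson R" using j jC by simp
next
  assume z: "z \<in> carrier R \<and> z \<ominus> \<one> \<in> jacobson R"
  hence "z = \<one> \<oplus> (z \<ominus> \<one>)" by algebra
  thus "z \<in> one_plus_J R" using z unfolding one_plus_J_def by blast
qed

lemma one_minus_one_plus_J: "z \<in> one_plus_J R \<Longrightarrow> \<one> \<ominus> z \<in> jacobson R"
  using jacobson_neg[of "z \<ominus> \<one>"] unfolding one_plus_J_iff
  by (metis a_minus_def minus_add minus_minus one_closed add.inv_closed a_comm)

lemma one_plus_J_Units: "z \<in> one_plus_J R \<Longrightarrow> z \<in> Units R"
  unfolding one_plus_J_def using one_plus_jacobson_Units by auto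

lemma one_plus_J_plus_jacobson: "z \<in> one_plus_J R \<Longrightarrow> j \<in> jacobson R \<Longrightarrow> z \<oplus> j \<in> one_plus_J R"
  unfolding one_plus_J_def using jacobson_add jacobson_closed by (auto simp: a_assoc)

lemma one_plus_J_minus_jacobson: "z \<in> one_plus_J R \<Longrightarrow> j \<in> jacobson R \<Longrightarrow> z \<ominus> j \<in> one_plus_J R"
  unfolding a_minus_def using one_plus_J_plus_jacobson jacobson_neg by blast

lemma one_plus_J_minus_jacobson_Units:
  assumes a: "a \<in> one_plus_J R" and b: "b \<in> jacobson R"
  shows "a \<ominus> b \<in> Units R" "b \<ominus> a \<in> Units R"
proof -
  have aC: "a \<in> carrier R" "a \<ominus> \<one> \<in> jacobson R" using a one_plus_J_iff by auto
  have bC: "b \<in> carrier R" using b jacobson_closed by auto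
  have "a \<ominus> b = \<one> \<oplus> ((a \<ominus> \<one>) \<ominus> b)" "b \<ominus> a = \<ominus> \<one> \<oplus> (b \<ominus> (a \<ominus> \<one>))"
    using aC bC by algebra+
  thus "a \<ominus> b \<in> Units R" "b \<ominus> a \<in> Units R"
    using one_plus_jacobson_Units[OF jacobson_minus[OF aC(2) b]]
      Units_plus_jacobson_Units[OF Units_minus_one_closed jacobson_minus[OF b aC(2)]] by simp_all
qed

section \<open>Similarity and idempotents\<close>

lemma Units_inv_mult_cancel [simp]: "u \<in> Units R \<Longrightarrow> y \<in> carrier R \<Longrightarrow> inv u \<otimes> (u \<otimes> y) = y"
  by (simp add: m_assoc[symmetric] Units_closed)

lemma Units_mult_inv_cancel [simp]: "u \<in> Units R \<Longrightarrow> y \<in> carrier R \<Longrightarrow> u \<otimes> (inv u \<otimes> y) = y"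
  by (simp add: m_assoc[symmetric] Units_closed)

lemma inv_mult_Units: "P \<in> Units R \<Longrightarrow> Q \<in> Units R \<Longrightarrow> inv (P \<otimes> Q) = inv Q \<otimes> inv P"
  by (rule inv_unique'[symmetric]) (auto simp: m_assoc Units_closed)

lemma conj_mult:
  "P \<in> Units R \<Longrightarrow> x \<in> carrier R \<Longrightarrow> y \<in> carrier R \<Longrightarrow>
    (inv P \<otimes> x \<otimes> P) \<otimes> (inv P \<otimes> y \<otimes> P) = inv P \<otimes> (x \<otimes> y) \<otimes> P"
  by (simp add: m_assoc Units_closed)

lemma conj_minus:
  assumes "P \<in> Units R" "x \<in> carrier R" "y \<in> carrier R"
  shows "(inv P \<otimes> x \<otimes> P) \<ominus> (inv P \<otimes> y \<otimes> P) = inv P \<otimes> (x \<ominus> y) \<otimes> P"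
  using assms by (simp add: a_minus_def r_distr l_distr r_minus l_minus Units_closed)

lemma conj_jacobson: "P \<in> Units R \<Longrightarrow> x \<in> jacobson R \<Longrightarrow> inv P \<otimes> x \<otimes> P \<in> jacobson R"
  by (intro jacobson_r_mult jacobson_l_mult) auto

lemma one_plus_J_conj:
  assumes P: "P \<in> Units R" and z: "z \<in> one_plus_J R" shows "P \<otimes> z \<otimes> inv P \<in> one_plus_J R"
proof -
  have zC: "z \<in> carrier R" "z \<ominus> \<one> \<in> jacobson R" using z one_plus_J_iff by auto
  have "P \<otimes> z \<otimes> inv P \<ominus> \<one> = P \<otimes> (z \<ominus> \<one>) \<otimes> inv P"
    using P zC by (simp add: a_minus_def r_distr l_distr r_minus l_minus Units_closed)
  moreover have "P \<otimes> (z \<ominus> \<one>) \<otimes> inv P \<in> jacobson R"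
    using P zC by (intro jacobson_r_mult jacobson_l_mult) auto
  ultimately show ?thesis using P zC one_plus_J_iff by auto
qed

lemma similar_closed: "A \<in> carrier R \<Longrightarrow> similar R A B \<Longrightarrow> B \<in> carrier R"
  unfolding similar_def by auto

lemma similar_sym:
  assumes "A \<in> carrier R" "similar R A B" shows "similar R B A"
proof -
  obtain P where P: "P \<in> Units R" "B = inv P \<otimes> A \<otimes> P" using assms(2) unfolding similar_def by blast
  have "inv (inv P) \<otimes> B \<otimes> inv P = (P \<otimes> inv P) \<otimes> A \<otimes> (P \<otimes> inv P)"
    using P assms(1) by (simp add: m_assoc Units_closed)
  thus ?thesis unfolding similar_def using P assms(1) by (intro bexI[of _ "inv P"]) auto
qed

lemma similar_trans:
  assumes "A \<in> carrier R" "similar R A B" "similar R B C" shows "similar R A C"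
proof -
  obtain P where P: "P \<in> Units R" "B = inv P \<otimes> A \<otimes> P" using assms(2) unfolding similar_def by blast
  obtain Q where Q: "Q \<in> Units R" "C = inv Q \<otimes> B \<otimes> Q" using assms(3) unfolding similar_def by blast
  have "C = inv (P \<otimes> Q) \<otimes> A \<otimes> (P \<otimes> Q)"
    unfolding inv_mult_Units[OF P(1) Q(1)] Q(2) P(2) using P Q assms(1) by (simp add: m_assoc Units_closed)
  thus ?thesis unfolding similar_def using P Q by blast
qed

lemma similar_if_intertwined:
  assumes Q: "Q \<in> Units R" and B: "B \<in> carrier R" and D: "D \<in> carrier R"
    and e: "B \<otimes> Q = Q \<otimes> D"
  shows "similar R B D" "similar R D B"
proof -
  have "inv Q \<otimes> B \<otimes> Q = inv Q \<otimes> (Q \<otimes> D)" using e B Q by (simp add: m_assoc Units_closed)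
  also have "\<dots> = D" using Q D by (simp add: m_assoc[symmetric] Units_closed)
  finally show "similar R B D" unfolding similar_def using Q by (intro bexI[of _ Q]) auto
  thus "similar R D B" using similar_sym B by blast
qed

lemma conj_clean:
  assumes P: "P \<in> Units R" and A: "A \<in> carrier R" and e: "e \<in> carrier R"
    and idem: "e \<otimes> e = e" and comm: "A \<otimes> e = e \<otimes> A" and J: "A \<ominus> e \<in> jacobson R"
  shows "(inv P \<otimes> e \<otimes> P) \<otimes> (inv P \<otimes> e \<otimes> P) = inv P \<otimes> e \<otimes> P"
    and "(inv P \<otimes> A \<otimes> P) \<otimes> (inv P \<otimes> e \<otimes> P) = (inv P \<otimes> e \<otimes> P) \<otimes> (inv P \<otimes> A \<otimes> P)"
    and "(inv P \<otimes> A \<otimes> P) \<ominus> (inv P \<otimes> e \<otimes> P) \<in> jacobson R"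
  using conj_mult[OF P e e] conj_mult[OF P A e] conj_mult[OF P e A] conj_minus[OF P A e]
    conj_jacobson[OF P J] idem comm by simp_all

lemma strongly_J_clean_similar:
  assumes A: "A \<in> carrier R" and sj: "strongly_J_clean R A" and sim: "similar R A B"
  shows "strongly_J_clean R B"
proof -
  obtain P where P: "P \<in> Units R" "B = inv P \<otimes> A \<otimes> P" using sim unfolding similar_def by blast
  obtain e where e: "e \<in> carrier R" "e \<otimes> e = e" "A \<otimes> e = e \<otimes> A" "A \<ominus> e \<in> jacobson R"
    using sj unfolding strongly_J_clean_def by blast
  note C = conj_clean[OF P(1) A e]
  show ?thesis unfolding strongly_J_clean_def P(2)
    using C P(1) e(1) by (intro bexI[of _ "inv P \<otimes> e \<otimes> P"]) auto
qed

lemma jacobson_if_congruent: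
  assumes "A \<in> carrier R" "e \<in> carrier R" "A \<ominus> e \<in> jacobson R"
  shows "e \<in> jacobson R \<Longrightarrow> A \<in> jacobson R"
    and "\<one> \<ominus> e \<in> jacobson R \<Longrightarrow> \<one> \<ominus> A \<in> jacobson R"
proof -
  have "A = (A \<ominus> e) \<oplus> e" "\<one> \<ominus> A = (\<one> \<ominus> e) \<ominus> (A \<ominus> e)" using assms by algebra+
  thus "e \<in> jacobson R \<Longrightarrow> A \<in> jacobson R" "\<one> \<ominus> e \<in> jacobson R \<Longrightarrow> \<one> \<ominus> A \<in> jacobson R"
    using jacobson_add jacobson_minus assms(3) by metis+
qed

lemma strongly_J_clean_of_jacobson:
  assumes "A \<in> jacobson R" shows "strongly_J_clean R A"
proof -
  have "A \<in> carrier R" using assms jacobson_closed by blast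
  thus ?thesis unfolding strongly_J_clean_def using assms by (intro bexI[of _ \<zero>]) (auto simp: a_minus_def)
qed

lemma strongly_J_clean_of_one_minus_jacobson:
  assumes A: "A \<in> carrier R" and J: "\<one> \<ominus> A \<in> jacobson R" shows "strongly_J_clean R A"
proof -
  have "A \<ominus> \<one> = \<ominus> (\<one> \<ominus> A)" using A by algebra
  thus ?thesis unfolding strongly_J_clean_def using A jacobson_neg[OF J] by (intro bexI[of _ \<one>]) auto
qed

text \<open>Idempotents congruent modulo the Jacobson radical are conjugate, by
  \<open>P = e f \<oplus> (\<one> \<ominus> e) (\<one> \<ominus> f) = \<one> \<oplus> (e \<ominus> f) (2 f \<ominus> \<one>)\<close>, which satisfies \<open>e P = e f = P f\<close>.\<close>

lemma idempotents_conjugate: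
  assumes e: "e \<in> carrier R" "e \<otimes> e = e" and f: "f \<in> carrier R" "f \<otimes> f = f"
    and ef: "e \<ominus> f \<in> jacobson R"
  obtains P where "P \<in> Units R" "inv P \<otimes> e \<otimes> P = f"
proof -
  define P where "P = e \<otimes> f \<oplus> (\<one> \<ominus> e) \<otimes> (\<one> \<ominus> f)"
  have PC: "P \<in> carrier R" unfolding P_def using e f by simp
  have "\<one> \<oplus> (e \<ominus> f) \<otimes> (f \<oplus> f \<ominus> \<one>) = P \<oplus> (f \<ominus> f \<otimes> f) \<oplus> (f \<ominus> f \<otimes> f)"
    unfolding P_def using e(1) f(1) by algebra
  also have "\<dots> = P" using PC f by (simp add: a_minus_def r_neg)
  finally have "P = \<one> \<oplus> (e \<ominus> f) \<otimes> (f \<oplus> f \<ominus> \<one>)" by simp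
  hence PU: "P \<in> Units R" using one_plus_jacobson_Units[OF jacobson_r_mult[OF ef]] f by simp
  have "e \<otimes> P = (e \<otimes> e) \<otimes> f \<oplus> (e \<ominus> e \<otimes> e) \<otimes> (\<one> \<ominus> f)"
    and "P \<otimes> f = e \<otimes> (f \<otimes> f) \<oplus> (\<one> \<ominus> e) \<otimes> (f \<ominus> f \<otimes> f)"
    unfolding P_def using e(1) f(1) by algebra+
  hence "e \<otimes> P = P \<otimes> f" using e f by (simp add: a_minus_def r_neg)
  hence "inv P \<otimes> e \<otimes> P = f" using PU e f by (simp add: m_assoc Units_closed)
  thus ?thesis using PU that by blast
qed

lemma clean_idempotent_transfer:
  assumes A: "A \<in> carrier R" and e: "e \<in> carrier R" "e \<otimes> e = e"
    and comm: "A \<otimes> e = e \<otimes> A" and J: "A \<ominus> e \<in> jacobson R"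
    and f: "f \<in> carrier R" "f \<otimes> f = f" and ef: "e \<ominus> f \<in> jacobson R"
  obtains B where "similar R A B" "B \<in> carrier R" "B \<otimes> f = f \<otimes> B" "B \<ominus> f \<in> jacobson R"
proof -
  obtain P where P: "P \<in> Units R" "inv P \<otimes> e \<otimes> P = f"
    using idempotents_conjugate[OF e f ef] .
  note C = conj_clean[OF P(1) A e comm J, unfolded P(2)]
  have "similar R A (inv P \<otimes> A \<otimes> P)" unfolding similar_def using P(1) by blast
  moreover have "inv P \<otimes> A \<otimes> P \<in> carrier R" using P(1) A by auto
  ultimately show ?thesis using C(2,3) that by blast
qed

end

section \<open>Local rings\<close>

locale loc_ring = ring +
  assumes local: "local_ring R"
begin

lemma one_not_zero: "\<one> \<noteq> \<zero>"
proof
  assume h: "\<one> = \<zero>"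
  hence "carrier R = {\<zero>}" by (auto, metis r_one r_null)
  hence J0: "jacobson R = {\<zero>}" using jacobson_zero jacobson_closed by blast
  have "jacobson R +> \<one> = {\<zero>}" unfolding J0 a_r_coset_def' using h by simp
  hence "\<one>\<^bsub>R Quot jacobson R\<^esub> = \<zero>\<^bsub>R Quot jacobson R\<^esub>" unfolding FactRing_def using J0 by simp
  thus False using local unfolding local_ring_def division_ring_def by simp
qed

text \<open>If \<open>x \<notin> J\<close>, the coset of \<open>x\<close> has an inverse \<open>y \<oplus> J\<close> in the division ring \<open>R/J\<close>;
  then \<open>x y\<close> and \<open>y x\<close> lie in \<open>\<one> \<oplus> J\<close>, so they are units.\<close>

lemma not_jacobson_Units:
  assumes x: "x \<in> carrier R" and nx: "x \<notin> jacobson R"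
  shows "x \<in> Units R"
proof -
  interpret J: ideal "jacobson R" R by (rule jacobson_ideal)
  let ?Q = "R Quot jacobson R"
  have Q: "carrier ?Q = a_rcosets (jacobson R)" "\<zero>\<^bsub>?Q\<^esub> = jacobson R"
    "\<one>\<^bsub>?Q\<^esub> = jacobson R +> \<one>"
    unfolding FactRing_def by simp_all
  have mult: "(jacobson R +> a) \<otimes>\<^bsub>?Q\<^esub> (jacobson R +> b) = jacobson R +> (a \<otimes> b)"
    if "a \<in> carrier R" "b \<in> carrier R" for a b
    using J.rcoset_mult_add[OF that] unfolding FactRing_def by simp
  have "jacobson R +> x \<noteq> \<zero>\<^bsub>?Q\<^esub>" using J.a_rcos_self[OF x] nx Q(2) by auto
  moreover have "jacobson R +> x \<in> carrier ?Q" using x unfolding Q(1) A_RCOSETS_def' by auto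
  ultimately have "jacobson R +> x \<in> Units ?Q"
    using local unfolding local_ring_def division_ring_def by blast
  then obtain Y where Y: "Y \<in> carrier ?Q" "Y \<otimes>\<^bsub>?Q\<^esub> (jacobson R +> x) = \<one>\<^bsub>?Q\<^esub>"
    "(jacobson R +> x) \<otimes>\<^bsub>?Q\<^esub> Y = \<one>\<^bsub>?Q\<^esub>" unfolding Units_def by auto
  obtain y where y: "y \<in> carrier R" "Y = jacobson R +> y"
    using Y(1) unfolding Q(1) A_RCOSETS_def' by auto
  have "a \<in> one_plus_J R" if "a \<in> carrier R" "jacobson R +> a = jacobson R +> \<one>" for a
    using J.a_rcos_module_imp[OF one_closed J.a_repr_independenceD[OF that(1)]] that
    by (simp add: one_plus_J_iff a_minus_def)
  hence "x \<otimes> y \<in> one_plus_J R" "y \<otimes> x \<in> one_plus_J R"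
    using Y(2,3) x y mult Q(3) by simp_all
  thus ?thesis using Units_of_Units_products x y(1) one_plus_J_Units by blast
qed

lemma idempotent_mod_jacobson_cases:
  assumes x: "x \<in> carrier R" and h: "x \<otimes> x \<ominus> x \<in> jacobson R"
  shows "x \<in> jacobson R \<or> x \<in> one_plus_J R"
proof (cases "x \<in> jacobson R")
  case False
  hence u: "x \<in> Units R" using not_jacobson_Units x by blast
  have "x \<ominus> \<one> = inv x \<otimes> (x \<otimes> x \<ominus> x)" using u x
    by (simp add: a_minus_def r_distr r_minus m_assoc[symmetric] Units_closed)
  thus ?thesis using jacobson_l_mult[OF _ h] u x one_plus_J_iff by simp
qed simp

end

section \<open>The ring \<open>M\<^sub>2(R;s)\<close>\<close>

locale M2_ring = ring R for R (structure) +
  fixes s assumes central_s: "central R s"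
begin

lemma s_closed [simp]: "s \<in> carrier R"
  using central_s unfolding central_def by auto

lemma s_comm: "x \<in> carrier R \<Longrightarrow> x \<otimes> s = s \<otimes> x"
  using central_s unfolding central_def by auto

lemma s_left_commute: "x \<in> carrier R \<Longrightarrow> y \<in> carrier R \<Longrightarrow> x \<otimes> (s \<otimes> y) = s \<otimes> (x \<otimes> y)"
  by (metis m_assoc s_closed s_comm)

lemma M2_carrier: "carrier (M2 R s) = carrier R \<times> carrier R \<times> carrier R \<times> carrier R"
  unfolding M2_def by simp

lemma M2_carrier_iff [simp]: "(a, b, c, d) \<in> carrier (M2 R s) \<longleftrightarrow>
  a \<in> carrier R \<and> b \<in> carrier R \<and> c \<in> carrier R \<and> d \<in> carrier R"
  unfolding M2_carrier by simp

lemma M2_carrierE: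
  assumes "x \<in> carrier (M2 R s)"
  obtains a b c d where "x = (a, b, c, d)" "a \<in> carrier R" "b \<in> carrier R" "c \<in> carrier R" "d \<in> carrier R"
  using assms unfolding M2_carrier by auto

lemma M2_mult [simp]: "(a, b, c, d) \<otimes>\<^bsub>M2 R s\<^esub> (a', b', c', d') =
  (a \<otimes> a' \<oplus> s \<otimes> s \<otimes> b \<otimes> c', a \<otimes> b' \<oplus> b \<otimes> d', c \<otimes> a' \<oplus> d \<otimes> c',
   s \<otimes> s \<otimes> c \<otimes> b' \<oplus> d \<otimes> d')"
  unfolding M2_def M2_mult_def e11_def e12_def e21_def e22_def by simp

lemma M2_add [simp]: "(a, b, c, d) \<oplus>\<^bsub>M2 R s\<^esub> (a', b', c', d') =
  (a \<oplus> a', b \<oplus> b', c \<oplus> c', d \<oplus> d')"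
  unfolding M2_def M2_add_def e11_def e12_def e21_def e22_def by simp

lemma M2_one [simp]: "\<one>\<^bsub>M2 R s\<^esub> = (\<one>, \<zero>, \<zero>, \<one>)"
  unfolding M2_def by simp

lemma M2_zero [simp]: "\<zero>\<^bsub>M2 R s\<^esub> = (\<zero>, \<zero>, \<zero>, \<zero>)"
  unfolding M2_def by simp

lemma M2_abelian_group: "abelian_group (M2 R s)"
proof (rule abelian_groupI)
  fix x y z assume "x \<in> carrier (M2 R s)" "y \<in> carrier (M2 R s)" "z \<in> carrier (M2 R s)"
  then show "x \<oplus>\<^bsub>M2 R s\<^esub> y \<in> carrier (M2 R s)"
    and "x \<oplus>\<^bsub>M2 R s\<^esub> y \<oplus>\<^bsub>M2 R s\<^esub> z = x \<oplus>\<^bsub>M2 R s\<^esub> (y \<oplus>\<^bsub>M2 R s\<^esub> z)"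
    and "x \<oplus>\<^bsub>M2 R s\<^esub> y = y \<oplus>\<^bsub>M2 R s\<^esub> x"
    by (auto elim!: M2_carrierE simp: a_ac)
next
  fix x assume "x \<in> carrier (M2 R s)"
  then obtain a b c d where x: "x = (a, b, c, d)" "a \<in> carrier R" "b \<in> carrier R" "c \<in> carrier R" "d \<in> carrier R"
    by (rule M2_carrierE)
  thus "\<zero>\<^bsub>M2 R s\<^esub> \<oplus>\<^bsub>M2 R s\<^esub> x = x" by simp
  show "\<exists>y\<in>carrier (M2 R s). y \<oplus>\<^bsub>M2 R s\<^esub> x = \<zero>\<^bsub>M2 R s\<^esub>"
    using x by (intro bexI[of _ "(\<ominus> a, \<ominus> b, \<ominus> c, \<ominus> d)"]) (auto simp: l_neg)
qed simp

lemma M2_mult_assoc: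
  assumes "a \<in> carrier R" "b \<in> carrier R" "c \<in> carrier R" "d \<in> carrier R"
    "a' \<in> carrier R" "b' \<in> carrier R" "c' \<in> carrier R" "d' \<in> carrier R"
    "a'' \<in> carrier R" "b'' \<in> carrier R" "c'' \<in> carrier R" "d'' \<in> carrier R"
  shows "(a, b, c, d) \<otimes>\<^bsub>M2 R s\<^esub> (a', b', c', d') \<otimes>\<^bsub>M2 R s\<^esub> (a'', b'', c'', d'') =
    (a, b, c, d) \<otimes>\<^bsub>M2 R s\<^esub> ((a', b', c', d') \<otimes>\<^bsub>M2 R s\<^esub> (a'', b'', c'', d''))"
  using assms by (simp add: r_distr l_distr m_assoc a_ac s_left_commute[of a] s_left_commute[of b]
    s_left_commute[of c] s_left_commute[of d] s_left_commute[of a'] s_left_commute[of b']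
    s_left_commute[of c'] s_left_commute[of d'])

lemma M2_monoid: "monoid (M2 R s)"
proof (rule monoidI)
  fix x y z assume "x \<in> carrier (M2 R s)" "y \<in> carrier (M2 R s)" "z \<in> carrier (M2 R s)"
  then show "x \<otimes>\<^bsub>M2 R s\<^esub> y \<in> carrier (M2 R s)"
    and "x \<otimes>\<^bsub>M2 R s\<^esub> y \<otimes>\<^bsub>M2 R s\<^esub> z = x \<otimes>\<^bsub>M2 R s\<^esub> (y \<otimes>\<^bsub>M2 R s\<^esub> z)"
    by (auto elim!: M2_carrierE intro: M2_mult_assoc)
next
  fix x assume "x \<in> carrier (M2 R s)"
  then show "\<one>\<^bsub>M2 R s\<^esub> \<otimes>\<^bsub>M2 R s\<^esub> x = x" "x \<otimes>\<^bsub>M2 R s\<^esub> \<one>\<^bsub>M2 R s\<^esub> = x"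
    by (auto elim!: M2_carrierE)
qed simp

lemma M2_is_ring: "ring (M2 R s)"
proof (rule ringI[OF M2_abelian_group M2_monoid])
  fix x y z assume "x \<in> carrier (M2 R s)" "y \<in> carrier (M2 R s)" "z \<in> carrier (M2 R s)"
  then obtain a b c d a' b' c' d' a'' b'' c'' d'' where
    "x = (a, b, c, d)" "y = (a', b', c', d')" "z = (a'', b'', c'', d'')"
    "a \<in> carrier R" "b \<in> carrier R" "c \<in> carrier R" "d \<in> carrier R"
    "a' \<in> carrier R" "b' \<in> carrier R" "c' \<in> carrier R" "d' \<in> carrier R"
    "a'' \<in> carrier R" "b'' \<in> carrier R" "c'' \<in> carrier R" "d'' \<in> carrier R"
    by (metis M2_carrierE)
  then show "(x \<oplus>\<^bsub>M2 R s\<^esub> y) \<otimes>\<^bsub>M2 R s\<^esub> z = x \<otimes>\<^bsub>M2 R s\<^esub> z \<oplus>\<^bsub>M2 R s\<^esub> y \<otimes>\<^bsub>M2 R s\<^esub> z"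
    and "z \<otimes>\<^bsub>M2 R s\<^esub> (x \<oplus>\<^bsub>M2 R s\<^esub> y) = z \<otimes>\<^bsub>M2 R s\<^esub> x \<oplus>\<^bsub>M2 R s\<^esub> z \<otimes>\<^bsub>M2 R s\<^esub> y"
    by (simp_all add: r_distr l_distr m_assoc a_ac)
qed

end

locale M2_local = M2_ring + loc_ring R +
  assumes s_jacobson: "s \<in> jacobson R"
begin

sublocale M: ring "M2 R s" by (rule M2_is_ring)

lemma M2_minus [simp]:
  assumes "a \<in> carrier R" "b \<in> carrier R" "c \<in> carrier R" "d \<in> carrier R"
    "a' \<in> carrier R" "b' \<in> carrier R" "c' \<in> carrier R" "d' \<in> carrier R"
  shows "(a, b, c, d) \<ominus>\<^bsub>M2 R s\<^esub> (a', b', c', d') = (a \<ominus> a', b \<ominus> b', c \<ominus> c', d \<ominus> d')"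
proof -
  have "\<ominus>\<^bsub>M2 R s\<^esub> (a', b', c', d') = (\<ominus> a', \<ominus> b', \<ominus> c', \<ominus> d')"
    using assms by (intro M.minus_equality) (auto simp: l_neg)
  thus ?thesis unfolding a_minus_def[of "M2 R s"] a_minus_def[of R] by simp
qed

lemma ss_jacobson: "s \<otimes> s \<in> jacobson R"
  using s_jacobson by (intro jacobson_r_mult) auto

text \<open>Block \<open>LDU\<close> factorisation: \<open>[a b; c d] = [1 0; c a\<inverse> 1] [a 0; 0 d - s\<^sup>2 c a\<inverse> b] [1 a\<inverse> b; 0 1]\<close>,
  and the Schur complement is a unit because \<open>s\<^sup>2 \<in> J\<close>.\<close>

lemma M2_Units_of_diagonal_Units:
  assumes a: "a \<in> Units R" and d: "d \<in> Units R" and b: "b \<in> carrier R" and c: "c \<in> carrier R"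
  shows "(a, b, c, d) \<in> Units (M2 R s)"
proof -
  define l where "l = c \<otimes> inv a"
  define u where "u = inv a \<otimes> b"
  define \<delta> where "\<delta> = d \<ominus> s \<otimes> s \<otimes> c \<otimes> inv a \<otimes> b"
  have C: "a \<in> carrier R" "inv a \<in> carrier R" "d \<in> carrier R" "l \<in> carrier R" "u \<in> carrier R"
    unfolding l_def u_def using a b c d by auto
  have \<delta>: "\<delta> \<in> Units R" unfolding \<delta>_def a_minus_def
    using Units_plus_jacobson_Units[OF d jacobson_neg[OF jacobson_r_mult[OF jacobson_r_mult[OF jacobson_r_mult[OF ss_jacobson c]]]]]
      C b by auto
  have "(\<one>, \<zero>, l, \<one>) \<in> Units (M2 R s)" "(\<one>, u, \<zero>, \<one>) \<in> Units (M2 R s)"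
    by (rule M.UnitsI[of _ "(\<one>, \<zero>, \<ominus> l, \<one>)"] M.UnitsI[of _ "(\<one>, \<ominus> u, \<zero>, \<one>)"];
        use C in \<open>simp add: r_neg l_neg\<close>)+
  moreover have "(a, \<zero>, \<zero>, \<delta>) \<in> Units (M2 R s)"
    by (rule M.UnitsI[of _ "(inv a, \<zero>, \<zero>, inv \<delta>)"]) (use a \<delta> C in \<open>auto simp: Units_closed\<close>)
  moreover have "(\<one>, \<zero>, l, \<one>) \<otimes>\<^bsub>M2 R s\<^esub> (a, \<zero>, \<zero>, \<delta>) \<otimes>\<^bsub>M2 R s\<^esub> (\<one>, u, \<zero>, \<one>) = (a, b, c, d)"
    unfolding l_def u_def \<delta>_def using a b c d C
    by (simp add: m_assoc Units_closed a_minus_def l_neg a_ac r_neg)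
  ultimately show ?thesis by (metis M.Units_m_closed)
qed

lemma M2_jacobsonI:
  assumes a: "a \<in> jacobson R" and d: "d \<in> jacobson R" and b: "b \<in> carrier R" and c: "c \<in> carrier R"
  shows "(a, b, c, d) \<in> jacobson (M2 R s)"
proof (rule M.jacobsonI)
  have aC: "a \<in> carrier R" and dC: "d \<in> carrier R" using a d jacobson_closed by auto
  show "(a, b, c, d) \<in> carrier (M2 R s)" using aC b c dC by simp
  fix Y assume "Y \<in> carrier (M2 R s)"
  then obtain y1 y2 y3 y4 where Y: "Y = (y1, y2, y3, y4)" "y1 \<in> carrier R" "y2 \<in> carrier R"
    "y3 \<in> carrier R" "y4 \<in> carrier R" by (rule M2_carrierE)
  have "y1 \<otimes> a \<oplus> s \<otimes> s \<otimes> y2 \<otimes> c \<in> jacobson R" "s \<otimes> s \<otimes> y3 \<otimes> b \<oplus> y4 \<otimes> d \<in> jacobson R"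
    using jacobson_add[OF jacobson_l_mult[OF Y(2) a] jacobson_r_mult[OF jacobson_r_mult[OF ss_jacobson Y(3)] c]]
      jacobson_add[OF jacobson_r_mult[OF jacobson_r_mult[OF ss_jacobson Y(4)] b] jacobson_l_mult[OF Y(5) d]]
    by (simp_all add: m_assoc)
  hence "(\<one> \<ominus> (y1 \<otimes> a \<oplus> s \<otimes> s \<otimes> y2 \<otimes> c), \<zero> \<ominus> (y1 \<otimes> b \<oplus> y2 \<otimes> d),
      \<zero> \<ominus> (y3 \<otimes> a \<oplus> y4 \<otimes> c), \<one> \<ominus> (s \<otimes> s \<otimes> y3 \<otimes> b \<oplus> y4 \<otimes> d)) \<in> Units (M2 R s)"
    using Y aC b c dC by (intro M2_Units_of_diagonal_Units one_minus_jacobson_Units) auto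
  moreover have "\<one>\<^bsub>M2 R s\<^esub> \<ominus>\<^bsub>M2 R s\<^esub> Y \<otimes>\<^bsub>M2 R s\<^esub> (a, b, c, d) =
     (\<one> \<ominus> (y1 \<otimes> a \<oplus> s \<otimes> s \<otimes> y2 \<otimes> c), \<zero> \<ominus> (y1 \<otimes> b \<oplus> y2 \<otimes> d),
      \<zero> \<ominus> (y3 \<otimes> a \<oplus> y4 \<otimes> c), \<one> \<ominus> (s \<otimes> s \<otimes> y3 \<otimes> b \<oplus> y4 \<otimes> d))"
    using Y aC b c dC by simp
  ultimately show "M.left_invertible (\<one>\<^bsub>M2 R s\<^esub> \<ominus>\<^bsub>M2 R s\<^esub> Y \<otimes>\<^bsub>M2 R s\<^esub> (a, b, c, d))"
    unfolding M.left_invertible_def using M.Units_l_inv_ex by auto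
qed

lemma M2_zero_column_not_left_invertible:
  assumes "x \<in> carrier R" "y \<in> carrier R"
  shows "\<not> M.left_invertible (\<zero>, x, \<zero>, y)" "\<not> M.left_invertible (x, \<zero>, y, \<zero>)"
  using assms one_not_zero unfolding M.left_invertible_def by (auto elim!: M2_carrierE)

lemma M2_jacobsonD:
  assumes A: "(a, b, c, d) \<in> jacobson (M2 R s)"
  shows "a \<in> jacobson R" "d \<in> jacobson R"
proof -
  have C: "a \<in> carrier R" "b \<in> carrier R" "c \<in> carrier R" "d \<in> carrier R"
    using M.jacobson_closed[OF A] by auto
  show "a \<in> jacobson R"
  proof (rule ccontr)
    assume "a \<notin> jacobson R"
    hence a: "a \<in> Units R" using not_jacobson_Units C by blast
    have "M.left_invertible (\<one>\<^bsub>M2 R s\<^esub> \<ominus>\<^bsub>M2 R s\<^esub> (inv a, \<zero>, \<zero>, \<zero>) \<otimes>\<^bsub>M2 R s\<^esub> (a, b, c, d))"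
      by (rule M.jacobsonD[OF A]) (use a in simp)
    moreover have "\<one>\<^bsub>M2 R s\<^esub> \<ominus>\<^bsub>M2 R s\<^esub> (inv a, \<zero>, \<zero>, \<zero>) \<otimes>\<^bsub>M2 R s\<^esub> (a, b, c, d)
        = (\<one> \<ominus> \<one>, \<zero> \<ominus> inv a \<otimes> b, \<zero> \<ominus> \<zero>, \<one> \<ominus> \<zero>)"
      using a C by simp
    moreover have "(\<one> \<ominus> \<one>, \<zero> \<ominus> inv a \<otimes> b, \<zero> \<ominus> \<zero>, \<one> \<ominus> \<zero>) = (\<zero>, \<ominus> (inv a \<otimes> b), \<zero>, \<one>)"
      using a C by (simp add: minus_eq r_neg)
    ultimately have "M.left_invertible (\<zero>, \<ominus> (inv a \<otimes> b), \<zero>, \<one>)" by (simp only:)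
    thus False using M2_zero_column_not_left_invertible(1) a C by simp
  qed
  show "d \<in> jacobson R"
  proof (rule ccontr)
    assume "d \<notin> jacobson R"
    hence d: "d \<in> Units R" using not_jacobson_Units C by blast
    have "M.left_invertible (\<one>\<^bsub>M2 R s\<^esub> \<ominus>\<^bsub>M2 R s\<^esub> (\<zero>, \<zero>, \<zero>, inv d) \<otimes>\<^bsub>M2 R s\<^esub> (a, b, c, d))"
      by (rule M.jacobsonD[OF A]) (use d in simp)
    moreover have "\<one>\<^bsub>M2 R s\<^esub> \<ominus>\<^bsub>M2 R s\<^esub> (\<zero>, \<zero>, \<zero>, inv d) \<otimes>\<^bsub>M2 R s\<^esub> (a, b, c, d)
        = (\<one> \<ominus> \<zero>, \<zero> \<ominus> \<zero>, \<zero> \<ominus> inv d \<otimes> c, \<one> \<ominus> \<one>)"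
      using d C by simp
    moreover have "(\<one> \<ominus> \<zero>, \<zero> \<ominus> \<zero>, \<zero> \<ominus> inv d \<otimes> c, \<one> \<ominus> \<one>) = (\<one>, \<zero>, \<ominus> (inv d \<otimes> c), \<zero>)"
      using d C by (simp add: minus_eq r_neg)
    ultimately have "M.left_invertible (\<one>, \<zero>, \<ominus> (inv d \<otimes> c), \<zero>)" by (simp only:)
    thus False using M2_zero_column_not_left_invertible(2) d C by simp
  qed
qed

lemma M2_jacobson_iff [simp]: "(a, b, c, d) \<in> jacobson (M2 R s) \<longleftrightarrow>
    a \<in> jacobson R \<and> d \<in> jacobson R \<and> b \<in> carrier R \<and> c \<in> carrier R"
proof
  assume A: "(a, b, c, d) \<in> jacobson (M2 R s)"
  thus "a \<in> jacobson R \<and> d \<in> jacobson R \<and> b \<in> carrier R \<and> c \<in> carrier R"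
    using M2_jacobsonD[OF A] M.jacobson_closed[OF A] by simp
qed (simp add: M2_jacobsonI)

section \<open>Strongly \<open>J\<close>-clean matrices up to similarity\<close>

lemma M2_idempotent_diagonal_entries:
  assumes C: "e1 \<in> carrier R" "e2 \<in> carrier R" "e3 \<in> carrier R" "e4 \<in> carrier R"
    and idem: "(e1, e2, e3, e4) \<otimes>\<^bsub>M2 R s\<^esub> (e1, e2, e3, e4) = (e1, e2, e3, e4)"
  shows "e1 \<in> jacobson R \<or> e1 \<in> one_plus_J R" "e4 \<in> jacobson R \<or> e4 \<in> one_plus_J R"
proof -
  have h1: "e1 \<otimes> e1 \<oplus> s \<otimes> s \<otimes> e2 \<otimes> e3 = e1" and h4: "s \<otimes> s \<otimes> e3 \<otimes> e2 \<oplus> e4 \<otimes> e4 = e4"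
    using idem by simp_all
  have "e1 \<otimes> e1 \<ominus> e1 = e1 \<otimes> e1 \<ominus> (e1 \<otimes> e1 \<oplus> s \<otimes> s \<otimes> e2 \<otimes> e3)" using h1 by simp
  also have "\<dots> = \<ominus> (s \<otimes> s \<otimes> e2 \<otimes> e3)" using C s_closed by algebra
  finally have sq1: "e1 \<otimes> e1 \<ominus> e1 = \<ominus> (s \<otimes> s \<otimes> e2 \<otimes> e3)" .
  have "e4 \<otimes> e4 \<ominus> e4 = e4 \<otimes> e4 \<ominus> (s \<otimes> s \<otimes> e3 \<otimes> e2 \<oplus> e4 \<otimes> e4)" using h4 by simp
  also have "\<dots> = \<ominus> (s \<otimes> s \<otimes> e3 \<otimes> e2)" using C s_closed by algebra
  finally have sq4: "e4 \<otimes> e4 \<ominus> e4 = \<ominus> (s \<otimes> s \<otimes> e3 \<otimes> e2)" .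
  have "s \<otimes> s \<otimes> e2 \<otimes> e3 \<in> jacobson R" "s \<otimes> s \<otimes> e3 \<otimes> e2 \<in> jacobson R"
    using C by (simp_all add: jacobson_r_mult ss_jacobson)
  thus "e1 \<in> jacobson R \<or> e1 \<in> one_plus_J R" "e4 \<in> jacobson R \<or> e4 \<in> one_plus_J R"
    using idempotent_mod_jacobson_cases[OF C(1)] idempotent_mod_jacobson_cases[OF C(4)]
      sq1 sq4 jacobson_neg by simp_all
qed

lemma M2_commute_diagonal_idempotent:
  assumes pq: "(p = \<one> \<and> q = \<zero>) \<or> (p = \<zero> \<and> q = \<one>)"
    and C: "b1 \<in> carrier R" "b2 \<in> carrier R" "b3 \<in> carrier R" "b4 \<in> carrier R"
    and comm: "(b1, b2, b3, b4) \<otimes>\<^bsub>M2 R s\<^esub> (p, \<zero>, \<zero>, q) = (p, \<zero>, \<zero>, q) \<otimes>\<^bsub>M2 R s\<^esub> (b1, b2, b3, b4)"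
  shows "b2 = \<zero>" "b3 = \<zero>"
  using pq comm C by auto

lemma M2_clean_similar_diagonal:
  assumes A: "A \<in> carrier (M2 R s)" and e: "e \<in> carrier (M2 R s)" "e \<otimes>\<^bsub>M2 R s\<^esub> e = e"
    and comm: "A \<otimes>\<^bsub>M2 R s\<^esub> e = e \<otimes>\<^bsub>M2 R s\<^esub> A" and J: "A \<ominus>\<^bsub>M2 R s\<^esub> e \<in> jacobson (M2 R s)"
    and E: "e = (e1, e2, e3, e4)" and pq: "(p = \<one> \<and> q = \<zero>) \<or> (p = \<zero> \<and> q = \<one>)"
    and J14: "e1 \<ominus> p \<in> jacobson R" "e4 \<ominus> q \<in> jacobson R"
  obtains a d where "similar (M2 R s) A (a, \<zero>, \<zero>, d)" "a \<in> carrier R" "d \<in> carrier R"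
    "a \<ominus> p \<in> jacobson R" "d \<ominus> q \<in> jacobson R"
proof -
  have f: "(p, \<zero>, \<zero>, q) \<in> carrier (M2 R s)"
    "(p, \<zero>, \<zero>, q) \<otimes>\<^bsub>M2 R s\<^esub> (p, \<zero>, \<zero>, q) = (p, \<zero>, \<zero>, q)"
    using pq by auto
  have "e \<ominus>\<^bsub>M2 R s\<^esub> (p, \<zero>, \<zero>, q) = (e1 \<ominus> p, e2, e3, e4 \<ominus> q)"
    using e(1) E pq by (auto simp: minus_eq)
  hence ef: "e \<ominus>\<^bsub>M2 R s\<^esub> (p, \<zero>, \<zero>, q) \<in> jacobson (M2 R s)" using e(1) E J14 by simp
  obtain B where B: "similar (M2 R s) A B" "B \<in> carrier (M2 R s)"
    "B \<otimes>\<^bsub>M2 R s\<^esub> (p, \<zero>, \<zero>, q) = (p, \<zero>, \<zero>, q) \<otimes>\<^bsub>M2 R s\<^esub> B"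
    "B \<ominus>\<^bsub>M2 R s\<^esub> (p, \<zero>, \<zero>, q) \<in> jacobson (M2 R s)"
    using M.clean_idempotent_transfer[OF A e comm J f ef] .
  obtain b1 b2 b3 b4 where b: "B = (b1, b2, b3, b4)" "b1 \<in> carrier R" "b2 \<in> carrier R"
    "b3 \<in> carrier R" "b4 \<in> carrier R" using B(2) by (rule M2_carrierE)
  have "b2 = \<zero>" "b3 = \<zero>" using M2_commute_diagonal_idempotent[OF pq b(2-5) B(3)[unfolded b(1)]] .
  moreover have "b1 \<ominus> p \<in> jacobson R" "b4 \<ominus> q \<in> jacobson R"
    using B(4) b f(1) by simp_all
  ultimately show ?thesis using that B(1) b by blast
qed

lemma M2_strongly_J_clean_cases:
  assumes A: "A \<in> carrier (M2 R s)" and sj: "strongly_J_clean (M2 R s) A"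
  shows "A \<in> jacobson (M2 R s) \<or> \<one>\<^bsub>M2 R s\<^esub> \<ominus>\<^bsub>M2 R s\<^esub> A \<in> jacobson (M2 R s) \<or>
    (\<exists>\<alpha> \<beta>. \<alpha> \<in> one_plus_J R \<and> \<beta> \<in> jacobson R \<and> similar (M2 R s) A (\<alpha>, \<zero>, \<zero>, \<beta>)) \<or>
    (\<exists>\<alpha> \<beta>. \<alpha> \<in> one_plus_J R \<and> \<beta> \<in> jacobson R \<and> similar (M2 R s) A (\<beta>, \<zero>, \<zero>, \<alpha>))"
proof -
  obtain e where e: "e \<in> carrier (M2 R s)" "e \<otimes>\<^bsub>M2 R s\<^esub> e = e"
    "A \<otimes>\<^bsub>M2 R s\<^esub> e = e \<otimes>\<^bsub>M2 R s\<^esub> A" "A \<ominus>\<^bsub>M2 R s\<^esub> e \<in> jacobson (M2 R s)"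
    using sj unfolding strongly_J_clean_def by blast
  obtain e1 e2 e3 e4 where E: "e = (e1, e2, e3, e4)" "e1 \<in> carrier R" "e2 \<in> carrier R"
    "e3 \<in> carrier R" "e4 \<in> carrier R" using e(1) by (rule M2_carrierE)
  note cases = M2_idempotent_diagonal_entries[OF E(2-5) e(2)[unfolded E(1)]]
  consider "e1 \<in> jacobson R" "e4 \<in> jacobson R" | "e1 \<in> one_plus_J R" "e4 \<in> one_plus_J R"
    | "e1 \<in> one_plus_J R" "e4 \<in> jacobson R" | "e1 \<in> jacobson R" "e4 \<in> one_plus_J R"
    using cases by blast
  thus ?thesis
  proof cases
    case 1
    hence "e \<in> jacobson (M2 R s)" using E by simp
    thus ?thesis using M.jacobson_if_congruent(1)[OF A e(1,4)] by blast
  next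
    case 2
    hence "\<one> \<ominus> e1 \<in> jacobson R" "\<one> \<ominus> e4 \<in> jacobson R"
      using one_minus_one_plus_J by simp_all
    hence "\<one>\<^bsub>M2 R s\<^esub> \<ominus>\<^bsub>M2 R s\<^esub> e \<in> jacobson (M2 R s)" using E by simp
    thus ?thesis using M.jacobson_if_congruent(2)[OF A e(1,4)] by blast
  next
    case 3
    obtain a d where "similar (M2 R s) A (a, \<zero>, \<zero>, d)" "a \<in> carrier R" "d \<in> carrier R"
      "a \<ominus> \<one> \<in> jacobson R" "d \<ominus> \<zero> \<in> jacobson R"
      by (rule M2_clean_similar_diagonal[OF A e E(1), of \<one> \<zero>]) (use 3 E one_plus_J_iff in \<open>auto simp: minus_eq\<close>)
    thus ?thesis using one_plus_J_iff by (auto simp: minus_eq)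
  next
    case 4
    obtain a d where "similar (M2 R s) A (a, \<zero>, \<zero>, d)" "a \<in> carrier R" "d \<in> carrier R"
      "a \<ominus> \<zero> \<in> jacobson R" "d \<ominus> \<one> \<in> jacobson R"
      by (rule M2_clean_similar_diagonal[OF A e E(1), of \<zero> \<one>]) (use 4 E one_plus_J_iff in \<open>auto simp: minus_eq\<close>)
    thus ?thesis using one_plus_J_iff by (auto simp: minus_eq)
  qed
qed

lemma M2_strongly_J_clean_diagonal:
  assumes \<alpha>: "\<alpha> \<in> one_plus_J R" and \<beta>: "\<beta> \<in> jacobson R"
  shows "strongly_J_clean (M2 R s) (\<alpha>, \<zero>, \<zero>, \<beta>)" "strongly_J_clean (M2 R s) (\<beta>, \<zero>, \<zero>, \<alpha>)"
proof -
  have C: "\<alpha> \<in> carrier R" "\<alpha> \<ominus> \<one> \<in> jacobson R" "\<beta> \<in> carrier R"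
    using \<alpha> \<beta> one_plus_J_iff jacobson_closed by auto
  show "strongly_J_clean (M2 R s) (\<alpha>, \<zero>, \<zero>, \<beta>)"
    unfolding strongly_J_clean_def using C \<beta> by (intro bexI[of _ "(\<one>, \<zero>, \<zero>, \<zero>)"]) (auto simp: minus_eq)
  show "strongly_J_clean (M2 R s) (\<beta>, \<zero>, \<zero>, \<alpha>)"
    unfolding strongly_J_clean_def using C \<beta> by (intro bexI[of _ "(\<zero>, \<zero>, \<zero>, \<one>)"]) (auto simp: minus_eq)
qed

lemma M2_strongly_J_clean_iff_similar_diagonal:
  assumes A: "A \<in> carrier (M2 R s)"
  shows "strongly_J_clean (M2 R s) A \<longleftrightarrow>
    A \<in> jacobson (M2 R s) \<or> \<one>\<^bsub>M2 R s\<^esub> \<ominus>\<^bsub>M2 R s\<^esub> A \<in> jacobson (M2 R s) \<or>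
    (\<exists>\<alpha> \<beta>. \<alpha> \<in> one_plus_J R \<and> \<beta> \<in> jacobson R \<and> similar (M2 R s) A (\<alpha>, \<zero>, \<zero>, \<beta>)) \<or>
    (\<exists>\<alpha> \<beta>. \<alpha> \<in> one_plus_J R \<and> \<beta> \<in> jacobson R \<and> similar (M2 R s) A (\<beta>, \<zero>, \<zero>, \<alpha>))"
    (is "_ \<longleftrightarrow> ?cases")
proof
  assume "strongly_J_clean (M2 R s) A"
  thus ?cases by (rule M2_strongly_J_clean_cases[OF A])
next
  have diag: "strongly_J_clean (M2 R s) A" if "similar (M2 R s) A D" "strongly_J_clean (M2 R s) D" for D
    using M.strongly_J_clean_similar[OF _ that(2) M.similar_sym[OF A that(1)]]
      M.similar_closed[OF A that(1)] by blast
  assume ?cases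
  thus "strongly_J_clean (M2 R s) A"
    using M.strongly_J_clean_of_jacobson M.strongly_J_clean_of_one_minus_jacobson[OF A]
      diag M2_strongly_J_clean_diagonal by blast
qed

section \<open>Diagonal matrices and quadratic equations\<close>

text \<open>By the choice of \<open>p\<close> and \<open>t\<close> the two products agree off the diagonal. On the diagonal their
  differences are \<open>v\<inverse>\<close> times the first quadratic evaluated at \<open>d\<^sub>1\<close>, and the second quadratic
  evaluated at \<open>d\<^sub>2\<close>.\<close>

lemma M2_intertwining_iff_right_roots:
  assumes C: "x \<in> carrier R" "y \<in> carrier R" "d1 \<in> carrier R" "d2 \<in> carrier R" and v: "v \<in> Units R"
  defines "p \<equiv> inv v \<otimes> (d1 \<ominus> y)" and "t \<equiv> d2 \<ominus> x"
  shows "(x, \<one>, v, y) \<otimes>\<^bsub>M2 R s\<^esub> (p, \<one>, \<one>, t) = (p, \<one>, \<one>, t) \<otimes>\<^bsub>M2 R s\<^esub> (d1, \<zero>, \<zero>, d2) \<longleftrightarrow>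
    right_root R (v \<otimes> x \<otimes> inv v \<oplus> y) (v \<otimes> x \<otimes> inv v \<otimes> y \<ominus> s \<otimes> s \<otimes> v) d1 \<and>
    right_root R (x \<oplus> y) (y \<otimes> x \<ominus> s \<otimes> s \<otimes> v) d2"
proof -
  have vC: "v \<in> carrier R" "inv v \<in> carrier R" using v by auto
  have pC: "p \<in> carrier R" and tC: "t \<in> carrier R" unfolding p_def t_def using C vC by auto
  have d1: "d1 = v \<otimes> p \<oplus> y" unfolding p_def using v C by (simp add: m_assoc[symmetric]) algebra
  have d2: "d2 = x \<oplus> t" unfolding t_def using C by algebra
  have "d1 \<otimes> d1 \<ominus> (v \<otimes> x \<otimes> inv v \<oplus> y) \<otimes> d1 \<oplus> (v \<otimes> x \<otimes> inv v \<otimes> y \<ominus> s \<otimes> s \<otimes> v) =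
      v \<otimes> (p \<otimes> d1 \<ominus> (x \<otimes> p \<oplus> s \<otimes> s)) \<oplus> (v \<otimes> x \<otimes> p \<ominus> v \<otimes> x \<otimes> (inv v \<otimes> v) \<otimes> p)
       \<oplus> (v \<otimes> (s \<otimes> s) \<ominus> s \<otimes> s \<otimes> v)"
    unfolding d1 using C vC pC s_closed by algebra
  also have "\<dots> = v \<otimes> (p \<otimes> d1 \<ominus> (x \<otimes> p \<oplus> s \<otimes> s))"
  proof -
    have "v \<otimes> (s \<otimes> s) = s \<otimes> s \<otimes> v" using vC by (simp add: m_assoc s_comm[of v] s_left_commute[of v])
    thus ?thesis using v C vC pC by (simp add: minus_eq r_neg)
  qed
  finally have eq1: "d1 \<otimes> d1 \<ominus> (v \<otimes> x \<otimes> inv v \<oplus> y) \<otimes> d1 \<oplus> (v \<otimes> x \<otimes> inv v \<otimes> y \<ominus> s \<otimes> s \<otimes> v) =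
      v \<otimes> (p \<otimes> d1 \<ominus> (x \<otimes> p \<oplus> s \<otimes> s))" .
  have "v \<otimes> (p \<otimes> d1 \<ominus> (x \<otimes> p \<oplus> s \<otimes> s)) = \<zero> \<longleftrightarrow> p \<otimes> d1 \<ominus> (x \<otimes> p \<oplus> s \<otimes> s) = \<zero>"
    using Units_l_cancel[OF v _ zero_closed, of "p \<otimes> d1 \<ominus> (x \<otimes> p \<oplus> s \<otimes> s)"] vC C pC by simp
  hence root1: "right_root R (v \<otimes> x \<otimes> inv v \<oplus> y) (v \<otimes> x \<otimes> inv v \<otimes> y \<ominus> s \<otimes> s \<otimes> v) d1 \<longleftrightarrow>
      x \<otimes> p \<oplus> s \<otimes> s = p \<otimes> d1"
    unfolding right_root_def eq1 using C pC by auto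
  have "d2 \<otimes> d2 \<ominus> (x \<oplus> y) \<otimes> d2 \<oplus> (y \<otimes> x \<ominus> s \<otimes> s \<otimes> v) = t \<otimes> d2 \<ominus> (s \<otimes> s \<otimes> v \<oplus> y \<otimes> t)"
    unfolding d2 using C vC tC s_closed by algebra
  hence root2: "right_root R (x \<oplus> y) (y \<otimes> x \<ominus> s \<otimes> s \<otimes> v) d2 \<longleftrightarrow> s \<otimes> s \<otimes> v \<oplus> y \<otimes> t = t \<otimes> d2"
    unfolding right_root_def using C vC tC by auto
  show ?thesis unfolding root1 root2 using C vC pC tC d1[symmetric] d2[symmetric] by auto
qed

lemma M2_similar_diagonal_of_right_roots:
  assumes C: "x \<in> carrier R" "y \<in> carrier R" "d1 \<in> carrier R" "d2 \<in> carrier R" and v: "v \<in> Units R"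
    and r1: "right_root R (v \<otimes> x \<otimes> inv v \<oplus> y) (v \<otimes> x \<otimes> inv v \<otimes> y \<ominus> s \<otimes> s \<otimes> v) d1"
    and r2: "right_root R (x \<oplus> y) (y \<otimes> x \<ominus> s \<otimes> s \<otimes> v) d2"
    and u1: "d1 \<ominus> y \<in> Units R" and u2: "d2 \<ominus> x \<in> Units R"
  shows "similar (M2 R s) (x, \<one>, v, y) (d1, \<zero>, \<zero>, d2)"
proof (rule M.similar_if_intertwined(1))
  show "(inv v \<otimes> (d1 \<ominus> y), \<one>, \<one>, d2 \<ominus> x) \<in> Units (M2 R s)"
    using v u1 u2 by (intro M2_Units_of_diagonal_Units) auto
  show "(x, \<one>, v, y) \<otimes>\<^bsub>M2 R s\<^esub> (inv v \<otimes> (d1 \<ominus> y), \<one>, \<one>, d2 \<ominus> x) =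
      (inv v \<otimes> (d1 \<ominus> y), \<one>, \<one>, d2 \<ominus> x) \<otimes>\<^bsub>M2 R s\<^esub> (d1, \<zero>, \<zero>, d2)"
    using M2_intertwining_iff_right_roots[OF C v] r1 r2 by blast
qed (use C v in auto)

text \<open>The intertwiner is \<open>[1 1; 1 d\<^sub>2 - x]\<close>; indeed \<open>v\<inverse>(d\<^sub>1 - y) = 1\<close> here.\<close>

lemma M2_similar_form_of_diagonal:
  assumes C: "d1 \<in> carrier R" "d2 \<in> carrier R" and g: "d1 \<ominus> d2 \<in> Units R"
    and x: "x = d1 \<ominus> s \<otimes> s" and y: "y = (d1 \<ominus> d2) \<otimes> (d2 \<oplus> s \<otimes> s) \<otimes> inv (d1 \<ominus> d2)"
    and v: "v = d1 \<ominus> y" "v \<in> Units R" and t: "d2 \<ominus> x \<in> Units R"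
  shows "similar (M2 R s) (d1, \<zero>, \<zero>, d2) (x, \<one>, v, y)"
    and "right_root R (v \<otimes> x \<otimes> inv v \<oplus> y) (v \<otimes> x \<otimes> inv v \<otimes> y \<ominus> s \<otimes> s \<otimes> v) d1"
    and "right_root R (x \<oplus> y) (y \<otimes> x \<ominus> s \<otimes> s \<otimes> v) d2"
proof -
  define w where "w = d2 \<oplus> s \<otimes> s"
  define t' where "t' = d2 \<ominus> x"
  have gC: "d1 \<ominus> d2 \<in> carrier R" "inv (d1 \<ominus> d2) \<in> carrier R" using g by auto
  have wC: "w \<in> carrier R" unfolding w_def using C by simp
  have xC: "x \<in> carrier R" and yC: "y \<in> carrier R" and t'C: "t' \<in> carrier R"
    unfolding x y t'_def using C gC by auto
  have p: "inv v \<otimes> (d1 \<ominus> y) = \<one>" using v by simp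
  have e4: "s \<otimes> s \<otimes> v \<oplus> y \<otimes> t' = t' \<otimes> d2"
  proof -
    have t'_eq: "t' = s \<otimes> s \<ominus> (d1 \<ominus> d2)" unfolding t'_def x using C s_closed by algebra
    have "y \<otimes> (s \<otimes> s) = s \<otimes> s \<otimes> y" using yC by (simp add: m_assoc s_comm[of y] s_left_commute[of y])
    moreover have "y \<otimes> (d1 \<ominus> d2) = (d1 \<ominus> d2) \<otimes> w"
      unfolding y w_def using g gC C by (simp add: m_assoc)
    ultimately have "y \<otimes> t' = s \<otimes> s \<otimes> y \<ominus> (d1 \<ominus> d2) \<otimes> w"
      unfolding t'_eq using yC gC by (simp add: a_minus_def r_distr r_minus)
    moreover have "s \<otimes> s \<otimes> d1 = d1 \<otimes> (s \<otimes> s)" "s \<otimes> s \<otimes> d2 = d2 \<otimes> (s \<otimes> s)"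
      using C by (simp_all add: m_assoc s_comm[of d1] s_comm[of d2] s_left_commute[of d1] s_left_commute[of d2])
    ultimately show ?thesis unfolding v(1) t'_eq w_def using C yC s_closed by algebra
  qed
  have intertwined: "(x, \<one>, v, y) \<otimes>\<^bsub>M2 R s\<^esub> (\<one>, \<one>, \<one>, t') = (\<one>, \<one>, \<one>, t') \<otimes>\<^bsub>M2 R s\<^esub> (d1, \<zero>, \<zero>, d2)"
  proof -
    have "x \<oplus> s \<otimes> s = d1" "x \<oplus> t' = d2" "v \<oplus> y = d1"
      unfolding x t'_def v(1) using C xC yC s_closed by algebra+
    thus ?thesis using e4 C xC yC t'C v by auto
  qed
  show "similar (M2 R s) (d1, \<zero>, \<zero>, d2) (x, \<one>, v, y)"
    by (rule M.similar_if_intertwined(2)[OF _ _ _ intertwined])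
      (use C xC yC v t[folded t'_def] t'C in \<open>auto intro: M2_Units_of_diagonal_Units\<close>)
  show "right_root R (v \<otimes> x \<otimes> inv v \<oplus> y) (v \<otimes> x \<otimes> inv v \<otimes> y \<ominus> s \<otimes> s \<otimes> v) d1"
    and "right_root R (x \<oplus> y) (y \<otimes> x \<ominus> s \<otimes> s \<otimes> v) d2"
    using M2_intertwining_iff_right_roots[OF xC yC C v(2)] intertwined unfolding p t'_def by auto
qed

lemma M2_similar_diagonal_iff_form_u1vw:
  assumes A: "A \<in> carrier (M2 R s)"
  shows "(\<exists>\<alpha> \<beta>. \<alpha> \<in> one_plus_J R \<and> \<beta> \<in> jacobson R \<and> similar (M2 R s) A (\<alpha>, \<zero>, \<zero>, \<beta>)) \<longleftrightarrow>
    (\<exists>u v w. u \<in> one_plus_J R \<and> v \<in> Units R \<and> w \<in> jacobson R \<and>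
       similar (M2 R s) A (u, \<one>, v, w) \<and>
       (\<exists>t \<in> one_plus_J R. right_root R (v \<otimes> u \<otimes> inv v \<oplus> w) (v \<otimes> u \<otimes> inv v \<otimes> w \<ominus> s \<otimes> s \<otimes> v) t) \<and>
       (\<exists>t \<in> jacobson R. right_root R (u \<oplus> w) (w \<otimes> u \<ominus> s \<otimes> s \<otimes> v) t))"
    (is "?diag \<longleftrightarrow> ?form")
proof
  assume ?diag
  then obtain \<alpha> \<beta> where \<alpha>: "\<alpha> \<in> one_plus_J R" and \<beta>: "\<beta> \<in> jacobson R"
    and sim: "similar (M2 R s) A (\<alpha>, \<zero>, \<zero>, \<beta>)" by blast
  have C: "\<alpha> \<in> carrier R" "\<beta> \<in> carrier R" using \<alpha> \<beta> one_plus_J_iff jacobson_closed by auto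
  define g where "g = \<alpha> \<ominus> \<beta>"
  define u where "u = \<alpha> \<ominus> s \<otimes> s"
  define w where "w = g \<otimes> (\<beta> \<oplus> s \<otimes> s) \<otimes> inv g"
  define v where "v = \<alpha> \<ominus> w"
  have g: "g \<in> Units R" unfolding g_def using one_plus_J_minus_jacobson_Units(1)[OF \<alpha> \<beta>] .
  have u: "u \<in> one_plus_J R" unfolding u_def using one_plus_J_minus_jacobson[OF \<alpha> ss_jacobson] .
  have w: "w \<in> jacobson R" unfolding w_def
    using g jacobson_add[OF \<beta> ss_jacobson] by (intro jacobson_r_mult jacobson_l_mult) auto
  have v: "v \<in> Units R" unfolding v_def using one_plus_J_minus_jacobson_Units(1)[OF \<alpha> w] .
  note F = M2_similar_form_of_diagonal[OF C g[unfolded g_def] u_def w_def[unfolded g_def] v_def v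
      one_plus_J_minus_jacobson_Units(2)[OF u \<beta>]]
  show ?form using M.similar_trans[OF A sim F(1)] F(2,3) u v w \<alpha> \<beta> by blast
next
  assume ?form
  then obtain u v w t1 t2 where u: "u \<in> one_plus_J R" and v: "v \<in> Units R" and w: "w \<in> jacobson R"
    and sim: "similar (M2 R s) A (u, \<one>, v, w)"
    and t1: "t1 \<in> one_plus_J R" "right_root R (v \<otimes> u \<otimes> inv v \<oplus> w) (v \<otimes> u \<otimes> inv v \<otimes> w \<ominus> s \<otimes> s \<otimes> v) t1"
    and t2: "t2 \<in> jacobson R" "right_root R (u \<oplus> w) (w \<otimes> u \<ominus> s \<otimes> s \<otimes> v) t2"
    by blast
  have C: "u \<in> carrier R" "w \<in> carrier R" "t1 \<in> carrier R" "t2 \<in> carrier R"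
    using u w t1 t2 one_plus_J_iff jacobson_closed by auto
  have "similar (M2 R s) (u, \<one>, v, w) (t1, \<zero>, \<zero>, t2)"
    using M2_similar_diagonal_of_right_roots[OF C v t1(2) t2(2)]
      one_plus_J_minus_jacobson_Units(1)[OF t1(1) w] one_plus_J_minus_jacobson_Units(2)[OF u t2(1)] by blast
  thus ?diag using M.similar_trans[OF A sim] t1(1) t2(1) by blast
qed

lemma M2_similar_diagonal_iff_form_w1vu:
  assumes A: "A \<in> carrier (M2 R s)"
  shows "(\<exists>\<alpha> \<beta>. \<alpha> \<in> one_plus_J R \<and> \<beta> \<in> jacobson R \<and> similar (M2 R s) A (\<beta>, \<zero>, \<zero>, \<alpha>)) \<longleftrightarrow>
    (\<exists>u v w. u \<in> one_plus_J R \<and> v \<in> Units R \<and> w \<in> jacobson R \<and>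
       similar (M2 R s) A (w, \<one>, v, u) \<and>
       (\<exists>t \<in> jacobson R. right_root R (u \<oplus> v \<otimes> w \<otimes> inv v) (v \<otimes> w \<otimes> inv v \<otimes> u \<ominus> s \<otimes> s \<otimes> v) t) \<and>
       (\<exists>t \<in> one_plus_J R. right_root R (u \<oplus> w) (u \<otimes> w \<ominus> s \<otimes> s \<otimes> v) t))"
    (is "?diag \<longleftrightarrow> ?form")
proof -
  have comm: "v \<otimes> w \<otimes> inv v \<oplus> u = u \<oplus> v \<otimes> w \<otimes> inv v" "w \<oplus> u = u \<oplus> w"
    if "u \<in> carrier R" "v \<in> Units R" "w \<in> carrier R" for u v w
    using that by (simp_all add: a_comm Units_closed)
  show ?thesis
  proof
    assume ?diag
    then obtain \<alpha> \<beta> where \<alpha>: "\<alpha> \<in> one_plus_J R" and \<beta>: "\<beta> \<in> jacobson R"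
      and sim: "similar (M2 R s) A (\<beta>, \<zero>, \<zero>, \<alpha>)" by blast
    have C: "\<alpha> \<in> carrier R" "\<beta> \<in> carrier R" using \<alpha> \<beta> one_plus_J_iff jacobson_closed by auto
    define g where "g = \<beta> \<ominus> \<alpha>"
    define w where "w = \<beta> \<ominus> s \<otimes> s"
    define u where "u = g \<otimes> (\<alpha> \<oplus> s \<otimes> s) \<otimes> inv g"
    define v where "v = \<beta> \<ominus> u"
    have g: "g \<in> Units R" unfolding g_def using one_plus_J_minus_jacobson_Units(2)[OF \<alpha> \<beta>] .
    have w: "w \<in> jacobson R" unfolding w_def using jacobson_minus[OF \<beta> ss_jacobson] .
    have u: "u \<in> one_plus_J R" unfolding u_def
      using one_plus_J_conj[OF g one_plus_J_plus_jacobson[OF \<alpha> ss_jacobson]] .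
    have v: "v \<in> Units R" unfolding v_def using one_plus_J_minus_jacobson_Units(2)[OF u \<beta>] .
    note F = M2_similar_form_of_diagonal[OF C(2,1) g[unfolded g_def] w_def u_def[unfolded g_def] v_def v
        one_plus_J_minus_jacobson_Units(1)[OF \<alpha> w]]
    have "u \<in> carrier R" "w \<in> carrier R" using u w one_plus_J_iff jacobson_closed by auto
    thus ?form using M.similar_trans[OF A sim F(1)] F(2,3) comm[of u v w] u v w \<alpha> \<beta> by auto
  next
    assume ?form
    then obtain u v w t1 t2 where u: "u \<in> one_plus_J R" and v: "v \<in> Units R" and w: "w \<in> jacobson R"
      and sim: "similar (M2 R s) A (w, \<one>, v, u)"
      and t1: "t1 \<in> jacobson R" "right_root R (u \<oplus> v \<otimes> w \<otimes> inv v) (v \<otimes> w \<otimes> inv v \<otimes> u \<ominus> s \<otimes> s \<otimes> v) t1"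
      and t2: "t2 \<in> one_plus_J R" "right_root R (u \<oplus> w) (u \<otimes> w \<ominus> s \<otimes> s \<otimes> v) t2"
      by blast
    have C: "w \<in> carrier R" "u \<in> carrier R" "t1 \<in> carrier R" "t2 \<in> carrier R"
      using u w t1 t2 one_plus_J_iff jacobson_closed by auto
    have "similar (M2 R s) (w, \<one>, v, u) (t1, \<zero>, \<zero>, t2)"
      using M2_similar_diagonal_of_right_roots[OF C v] t1(2) t2(2) comm[OF C(2) v C(1)]
        one_plus_J_minus_jacobson_Units(2)[OF u t1(1)] one_plus_J_minus_jacobson_Units(1)[OF t2(1) w]
      by simp
    thus ?diag using M.similar_trans[OF A sim] t1(1) t2(1) by blast
  qed
qed

end

theorem theorem2p16:
  fixes R :: "'a ring" and s :: 'a and A :: "'a \<times> 'a \<times> 'a \<times> 'a"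
  assumes "ring R" and "local_ring R" and "central R s" and "s \<in> jacobson R"
    and "A \<in> carrier (M2 R s)"
  shows "strongly_J_clean (M2 R s) A \<longleftrightarrow>
    A \<in> jacobson (M2 R s) \<or>
    \<one>\<^bsub>M2 R s\<^esub> \<ominus>\<^bsub>M2 R s\<^esub> A \<in> jacobson (M2 R s) \<or>
    (\<exists>u v w. u \<in> one_plus_J R \<and> v \<in> Units R \<and> w \<in> jacobson R \<and>
       similar (M2 R s) A (u, \<one>\<^bsub>R\<^esub>, v, w) \<and>
       (\<exists>t \<in> one_plus_J R. right_root R
          (v \<otimes>\<^bsub>R\<^esub> u \<otimes>\<^bsub>R\<^esub> inv\<^bsub>R\<^esub> v \<oplus>\<^bsub>R\<^esub> w)
          (v \<otimes>\<^bsub>R\<^esub> u \<otimes>\<^bsub>R\<^esub> inv\<^bsub>R\<^esub> v \<otimes>\<^bsub>R\<^esub> w \<ominus>\<^bsub>R\<^esub> s \<otimes>\<^bsub>R\<^esub> s \<otimes>\<^bsub>R\<^esub> v) t) \<and>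
       (\<exists>t \<in> jacobson R. right_root R
          (u \<oplus>\<^bsub>R\<^esub> w)
          (w \<otimes>\<^bsub>R\<^esub> u \<ominus>\<^bsub>R\<^esub> s \<otimes>\<^bsub>R\<^esub> s \<otimes>\<^bsub>R\<^esub> v) t)) \<or>
    (\<exists>u v w. u \<in> one_plus_J R \<and> v \<in> Units R \<and> w \<in> jacobson R \<and>
       similar (M2 R s) A (w, \<one>\<^bsub>R\<^esub>, v, u) \<and>
       (\<exists>t \<in> jacobson R. right_root R
          (u \<oplus>\<^bsub>R\<^esub> v \<otimes>\<^bsub>R\<^esub> w \<otimes>\<^bsub>R\<^esub> inv\<^bsub>R\<^esub> v)
          (v \<otimes>\<^bsub>R\<^esub> w \<otimes>\<^bsub>R\<^esub> inv\<^bsub>R\<^esub> v \<otimes>\<^bsub>R\<^esub> u \<ominus>\<^bsub>R\<^esub> s \<otimes>\<^bsub>R\<^esub> s \<otimes>\<^bsub>R\<^esub> v) t) \<and>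
       (\<exists>t \<in> one_plus_J R. right_root R
          (u \<oplus>\<^bsub>R\<^esub> w)
          (u \<otimes>\<^bsub>R\<^esub> w \<ominus>\<^bsub>R\<^esub> s \<otimes>\<^bsub>R\<^esub> s \<otimes>\<^bsub>R\<^esub> v) t))"
proof -
  interpret M2_local R s
    using assms(1-4) unfolding M2_local_def M2_local_axioms_def M2_ring_def M2_ring_axioms_def
      loc_ring_def loc_ring_axioms_def by simp
  show ?thesis
    using M2_strongly_J_clean_iff_similar_diagonal[OF assms(5)]
      M2_similar_diagonal_iff_form_u1vw[OF assms(5)] M2_similar_diagonal_iff_form_w1vu[OF assms(5)]
    by simp
qed

end
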